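(* With $H,E,P$ the generating functions $H(t,\bar\tau,\underline\tau)=\prod_i(1-(tx_i+\bar\tau\phi_i+\underline\tau\theta_i))^{-1}$, $E(t,\bar\tau,\underline\tau)=\prod_i(1+tx_i+\bar\tau\phi_i+\underline\tau\theta_i)$, $P(t,\bar\tau,\underline\tau)=\sum_i\frac{tx_i+\bar\tau\phi_i+\underline\tau\theta_i}{1-(tx_i+\bar\tau\phi_i+\underline\tau\theta_i)}$, one has $H(t,\bar\tau,\underline\tau)E(-t,-\bar\tau,-\underline\tau)=1$, $H P=\mathcal E H$ and $E(t,\bar\tau,\underline\tau)P(-t,-\bar\tau,-\underline\tau)=-\mathcal E E(t,\bar\tau,\underline\tau)$, where $\mathcal E$ is the Euler operator multiplying each monomial $t^a\bar\tau^{b}\underline\tau^{c}$ by $a+b+c$. Consequently, for every $n\ge0$: $$\sum_{r=0}^n(-1)^r\big(\bar{\underline e}_r h_{n-r}-\bar h_{n-r}\underline e_r-\bar e_r\underline h_{n-r}+e_r\bar{\underline h}_{n-r}\big)=0,$$ $$(n+2)\bar{\underline h}_n=\sum_{r=0}^n\Big(p_r\bar{\underline h}_{n-r}+(r+1)\big(\bar p_r\underline h_{n-r}+\bar h_{n-r}\underline p_r\big)+(r+2)(r+1)\bar{\underline p}_r h_{n-r}\Big),$$ $$(n+2)\bar{\underline e}_n=\sum_{r=0}^n(-1)^{r+1}\Big(p_r\bar{\underline e}_{n-r}-(r+1)\big(\bar p_r\underline e_{n-r}+\bar e_{n-r}\underline p_r\big)+(r+2)(r+1)\bar{\underline p}_r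 e_{n-r}\Big),$$ and also $\sum_{r=0}^n(-1)^r(e_r\bar h_{n-r}-\bar e_rh_{n-r})=0$, $(n+1)\bar h_n=\sum_{r=0}^n(p_r\bar h_{n-r}+(r+1)\bar p_rh_{n-r})$, $(n+1)\bar e_n=\sum_{r=0}^n(-1)^{r+1}(p_r\bar e_{n-r}-(r+1)\bar p_re_{n-r})$, together with the same three identities with all overlines replaced by underlines.
   Context: Let $x_1,x_2,\dots$ be commuting variables and $\phi_1,\phi_2,\dots,\theta_1,\theta_2,\dots$ Grassmann variables: all $\phi$'s and $\theta$'s pairwise anticommute and commute with the $x$'s; $\bar\tau,\underline\tau$ are two further Grassmann variables anticommuting with each other and with all $\phi_i,\theta_i$, commuting with $t$ and the $x_i$. Let $h_n,e_n$ be the classical complete homogeneous and elementary symmetric functions in the $x$'s ($h_0=e_0=1$), $\partial_i=\partial/\partial x_i$. For $n\ge0$ and $f\in\{h,e\}$: $\bar f_n=\sum_i\phi_i\,\partial_if_{n+1}$, $\underline f_n=\sum_i\theta_i\,\partial_if_{n+1}$, $\bar{\underline f}_n=\sum_{i,j}\phi_i\theta_j\,\partial_i\partial_jf_{n+2}$. Power sums: $p_n=\sum_ix_i^n$ for $n\ge1$, $p_0:=0$; for $n\ge0$: $\bar p_n=\sum_i\phi_ix_i^n$, $\underline p_n=\sum_i\theta_ix_i^n$, $\bar{\underline p}_n=\sum_i\phi_i\theta_ix_i^n$. *)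

theory Defs
  imports "HOL-Analysis.Analysis" "HOL-Library.FuncSet"
begin

text \<open>
An element f :: sga is a formal power series in a commuting variable t whose
coefficients lie in the Grassmann (exterior) algebra over the reals generated by
anticommuting generators indexed by natural numbers:
  generator 0 = tau-bar, 1 = tau-underline, 2i+2 = phi_i, 2i+3 = theta_i.
f a U is the coefficient of t^a e_U, where e_U is the product of the generators
in U in increasing order.  The commuting variables x_i are real parameters.
\<close>

type_synonym sga = "nat \<Rightarrow> nat set \<Rightarrow> real"

definition inv_count :: "nat set \<Rightarrow> nat set \<Rightarrow> nat" where
  "inv_count S T = card {(s, t). s \<in> S \<and> t \<in> T \<and> t < s}"

text \<open>Product: e_S e_T = (-1)^(inversions) e_(S union T) if S, T disjoint, 0 otherwise.\<close>
definition smul :: "sga \<Rightarrow> sga \<Rightarrow> sga" where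
  "smul f g = (\<lambda>a U. \<Sum>b\<le>a. \<Sum>S\<in>Pow U.
       (-1) ^ inv_count S (U - S) * f b S * g (a - b) (U - S))"

definition sone :: sga where
  "sone = (\<lambda>a U. if a = 0 \<and> U = {} then 1 else 0)"

definition szero :: sga where
  "szero = (\<lambda>a U. 0)"

definition sadd :: "sga \<Rightarrow> sga \<Rightarrow> sga" where
  "sadd f g = (\<lambda>a U. f a U + g a U)"

definition sdiff :: "sga \<Rightarrow> sga \<Rightarrow> sga" where
  "sdiff f g = (\<lambda>a U. f a U - g a U)"

definition sscal :: "real \<Rightarrow> sga \<Rightarrow> sga" where
  "sscal c f = (\<lambda>a U. c * f a U)"

definition ssum :: "(nat \<Rightarrow> sga) \<Rightarrow> nat set \<Rightarrow> sga" where
  "ssum f A = (\<lambda>a U. \<Sum>i\<in>A. f i a U)"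

definition sgen :: "nat \<Rightarrow> sga" where
  "sgen k = (\<lambda>a U. if a = 0 \<and> U = {k} then 1 else 0)"

definition svar_t :: sga where
  "svar_t = (\<lambda>a U. if a = 1 \<and> U = {} then 1 else 0)"

definition gtauB :: sga where "gtauB = sgen 0"
definition gtauU :: sga where "gtauU = sgen 1"
definition gphi :: "nat \<Rightarrow> sga" where "gphi i = sgen (2 * i + 2)"
definition gtheta :: "nat \<Rightarrow> sga" where "gtheta i = sgen (2 * i + 3)"

fun sprod :: "(nat \<Rightarrow> sga) \<Rightarrow> nat \<Rightarrow> sga" where
  "sprod f 0 = sone"
| "sprod f (Suc n) = smul (sprod f n) (f n)"

fun spow :: "sga \<Rightarrow> nat \<Rightarrow> sga" where
  "spow u 0 = sone"
| "spow u (Suc k) = smul (spow u k) u"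

text \<open>Formal geometric series (1 - u)^(-1) = sum_k u^k, for u without constant term
  (total degree in t and generators at least 1); then u^k contributes to the
  coefficient of t^a e_U only for k \<le> a + card U, so the truncation is exact.\<close>
definition sgeom :: "sga \<Rightarrow> sga" where
  "sgeom u = (\<lambda>a U. \<Sum>k\<le>a + card U. spow u k a U)"

text \<open>Euler operator: multiplies t^a taubar^b tauunder^c (...) by a + b + c.\<close>
definition euler_op :: "sga \<Rightarrow> sga" where
  "euler_op f = (\<lambda>a U. real (a + card (U \<inter> {0, 1})) * f a U)"

text \<open>c * (t x_i + taubar phi_i + tauunder theta_i); c = -1 realises the substitution
  (t, taubar, tauunder) \<mapsto> (-t, -taubar, -tauunder).\<close>
definition uvar :: "real \<Rightarrow> (nat \<Rightarrow> real) \<Rightarrow> nat \<Rightarrow> sga" where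
  "uvar c x i = sscal c (sadd (sscal (x i) svar_t)
                    (sadd (smul gtauB (gphi i)) (smul gtauU (gtheta i))))"

definition GH :: "nat \<Rightarrow> (nat \<Rightarrow> real) \<Rightarrow> sga" where
  "GH N x = sprod (\<lambda>i. sgeom (uvar 1 x i)) N"

definition GE :: "nat \<Rightarrow> (nat \<Rightarrow> real) \<Rightarrow> real \<Rightarrow> sga" where
  "GE N x c = sprod (\<lambda>i. sadd sone (uvar c x i)) N"

definition GP :: "nat \<Rightarrow> (nat \<Rightarrow> real) \<Rightarrow> real \<Rightarrow> sga" where
  "GP N x c = ssum (\<lambda>i. smul (uvar c x i) (sgeom (uvar c x i))) {..<N}"

definition hsym :: "nat \<Rightarrow> nat \<Rightarrow> (nat \<Rightarrow> real) \<Rightarrow> real" where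
  "hsym N n x = (\<Sum>\<alpha>\<in>{\<alpha> \<in> {..<N} \<rightarrow>\<^sub>E {..n}. sum \<alpha> {..<N} = n}. \<Prod>i<N. x i ^ \<alpha> i)"

definition esym :: "nat \<Rightarrow> nat \<Rightarrow> (nat \<Rightarrow> real) \<Rightarrow> real" where
  "esym N n x = (\<Sum>S\<in>{S. S \<subseteq> {..<N} \<and> card S = n}. \<Prod>i\<in>S. x i)"

definition psym :: "nat \<Rightarrow> nat \<Rightarrow> (nat \<Rightarrow> real) \<Rightarrow> real" where
  "psym N n x = (if n = 0 then 0 else \<Sum>i<N. x i ^ n)"

definition pd :: "nat \<Rightarrow> ((nat \<Rightarrow> real) \<Rightarrow> real) \<Rightarrow> (nat \<Rightarrow> real) \<Rightarrow> real" where
  "pd i F x = deriv (\<lambda>y. F (x(i := y))) (x i)"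

text \<open>f-bar (G = gphi) / f-underline (G = gtheta): sum_i G_i d_i f_(n+1).\<close>
definition glin :: "(nat \<Rightarrow> sga) \<Rightarrow> (nat \<Rightarrow> nat \<Rightarrow> (nat \<Rightarrow> real) \<Rightarrow> real)
    \<Rightarrow> nat \<Rightarrow> nat \<Rightarrow> (nat \<Rightarrow> real) \<Rightarrow> sga" where
  "glin G F N n x = ssum (\<lambda>i. sscal (pd i (F N (n + 1)) x) (G i)) {..<N}"

text \<open>f-bar-underline: sum_(i,j) phi_i theta_j d_i d_j f_(n+2).\<close>
definition gbu :: "(nat \<Rightarrow> nat \<Rightarrow> (nat \<Rightarrow> real) \<Rightarrow> real)
    \<Rightarrow> nat \<Rightarrow> nat \<Rightarrow> (nat \<Rightarrow> real) \<Rightarrow> sga" where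
  "gbu F N n x = ssum (\<lambda>i. ssum (\<lambda>j.
       sscal (pd i (pd j (F N (n + 2))) x) (smul (gphi i) (gtheta j))) {..<N}) {..<N}"

text \<open>p-bar (G = gphi) / p-underline (G = gtheta): sum_i G_i x_i^n.\<close>
definition plin :: "(nat \<Rightarrow> sga) \<Rightarrow> nat \<Rightarrow> nat \<Rightarrow> (nat \<Rightarrow> real) \<Rightarrow> sga" where
  "plin G N n x = ssum (\<lambda>i. sscal (x i ^ n) (G i)) {..<N}"

definition pbu :: "nat \<Rightarrow> nat \<Rightarrow> (nat \<Rightarrow> real) \<Rightarrow> sga" where
  "pbu N n x = ssum (\<lambda>i. sscal (x i ^ n) (smul (gphi i) (gtheta i))) {..<N}"

end

theory Submission
  imports Defs "HOL-Computational_Algebra.Formal_Power_Series" "HOL-Library.Function_Algebras"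
begin

text \<open>
The even part of the Grassmann-coefficient series ring is commutative, so the factors
t x_i + taubar phi_i + tauunder theta_i behave like ordinary commuting variables there:
each geometric series inverts 1 - u_i, and the Euler operator is a derivation fixing u_i.
The three generating-function identities then follow as for ordinary products.
The remaining identities only involve the coefficients of phi_i and phi_i theta_j, which are
first and second partial derivatives of symmetric functions.  They are obtained by
differentiating, coefficientwise in t, the classical identities E(-t) H(t) = 1 and the
Newton identities t H' = P H, t E' = -P(-t) E, which are proved in the power series ring
over the ring of polynomial functions of x.
\<close>

definition shuffle_sign :: "nat set \<Rightarrow> nat set \<Rightarrow> real" where
  "shuffle_sign S T = (-1) ^ inv_count S T"

lemma finite_inversions: "finite A \<Longrightarrow> finite B \<Longrightarrow> finite {(s, t). s \<in> A \<and> t \<in> B \<and> t < s}"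
  by (rule finite_subset[of _ "A \<times> B"]) auto

lemma inv_count_empty: "inv_count {} T = 0" "inv_count S {} = 0"
  by (simp_all add: inv_count_def)

lemma inv_count_Un_left:
  assumes "finite A" "finite B" "finite C" "A \<inter> B = {}"
  shows "inv_count (A \<union> B) C = inv_count A C + inv_count B C"
proof -
  have "{(s, t). s \<in> A \<union> B \<and> t \<in> C \<and> t < s} =
        {(s, t). s \<in> A \<and> t \<in> C \<and> t < s} \<union> {(s, t). s \<in> B \<and> t \<in> C \<and> t < s}" by auto
  then show ?thesis
    unfolding inv_count_def using assms by (simp add: card_Un_disjoint finite_inversions disjoint_iff)
qed

lemma inv_count_Un_right:
  assumes "finite A" "finite B" "finite C" "B \<inter> C = {}"
  shows "inv_count A (B \<union> C) = inv_count A B + inv_count A C"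
proof -
  have "{(s, t). s \<in> A \<and> t \<in> B \<union> C \<and> t < s} =
        {(s, t). s \<in> A \<and> t \<in> B \<and> t < s} \<union> {(s, t). s \<in> A \<and> t \<in> C \<and> t < s}" by auto
  then show ?thesis
    unfolding inv_count_def using assms by (simp add: card_Un_disjoint finite_inversions disjoint_iff)
qed

lemma inv_count_swap:
  assumes "finite A" "finite B" "A \<inter> B = {}"
  shows "inv_count A B + inv_count B A = card A * card B"
proof -
  have "A \<times> B = {(s, t). s \<in> A \<and> t \<in> B \<and> t < s} \<union> prod.swap ` {(s, t). s \<in> B \<and> t \<in> A \<and> t < s}"
    using assms by (auto simp: image_iff)
  then have "card (A \<times> B) = inv_count A B + inv_count B A"
    unfolding inv_count_def using assms
    by (simp add: card_Un_disjoint finite_inversions card_image disjoint_iff)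
  then show ?thesis by (simp add: card_cartesian_product)
qed

lemma shuffle_sign_swap:
  assumes "finite A" "finite B" "A \<inter> B = {}"
  shows "shuffle_sign B A = (-1) ^ (card A * card B) * shuffle_sign A B"
proof -
  have square: "shuffle_sign A B * shuffle_sign A B = 1"
    by (simp add: shuffle_sign_def power_mult_distrib[symmetric])
  have "shuffle_sign A B * shuffle_sign B A = (-1) ^ (card A * card B)"
    by (simp add: shuffle_sign_def power_add[symmetric] inv_count_swap[OF assms])
  then have "shuffle_sign A B * (shuffle_sign A B * shuffle_sign B A) = shuffle_sign A B * (-1) ^ (card A * card B)"
    by simp
  then show ?thesis
    by (simp add: mult.assoc[symmetric] square mult.commute)
qed

lemma shuffle_sign_assoc:
  assumes "finite U" "R \<subseteq> S" "S \<subseteq> U"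
  shows "shuffle_sign S (U - S) * shuffle_sign R (S - R) = shuffle_sign R (U - R) * shuffle_sign (S - R) (U - S)"
proof -
  have fin: "finite S" "finite R"
    using finite_subset[OF assms(3,1)] finite_subset[OF subset_trans[OF assms(2,3)] assms(1)] .
  have S: "R \<union> (S - R) = S" and UR: "(S - R) \<union> (U - S) = U - R"
    using assms by auto
  have "inv_count (R \<union> (S - R)) (U - S) = inv_count R (U - S) + inv_count (S - R) (U - S)"
    by (rule inv_count_Un_left) (use fin assms in auto)
  moreover have "inv_count R ((S - R) \<union> (U - S)) = inv_count R (S - R) + inv_count R (U - S)"
    by (rule inv_count_Un_right) (use fin assms in auto)
  ultimately have "inv_count S (U - S) + inv_count R (S - R) = inv_count R (U - R) + inv_count (S - R) (U - S)"
    unfolding S UR by simp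
  then show ?thesis
    unfolding shuffle_sign_def power_add[symmetric] by (simp only:)
qed

subsection \<open>The product of Grassmann-coefficient series\<close>

definition splittings :: "nat \<Rightarrow> nat set \<Rightarrow> (nat \<times> nat set) set" where
  "splittings a U = {..a} \<times> Pow U"

lemma finite_splittings: "finite U \<Longrightarrow> finite (splittings a U)"
  by (simp add: splittings_def)

lemma smul_splittings:
  "finite U \<Longrightarrow> smul f g a U = (\<Sum>(b, S)\<in>splittings a U. shuffle_sign S (U - S) * f b S * g (a - b) (U - S))"
  unfolding smul_def splittings_def shuffle_sign_def by (simp add: sum.cartesian_product)

lemma smul_infinite: "infinite U \<Longrightarrow> smul f g a U = 0"
  unfolding smul_def by simp

lemma smul_nonzero:
  assumes "smul f g a U \<noteq> 0"
  shows "finite U \<and> (\<exists>b S. b \<le> a \<and> S \<subseteq> U \<and> f b S \<noteq> 0 \<and> g (a - b) (U - S) \<noteq> 0)"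
proof -
  have fU: "finite U" using assms smul_infinite by blast
  from assms obtain b S where "b \<le> a" "S \<subseteq> U" "shuffle_sign S (U - S) * f b S * g (a - b) (U - S) \<noteq> 0"
    unfolding smul_splittings[OF fU] splittings_def by (auto elim!: sum.not_neutral_contains_not_neutral)
  with fU show ?thesis by auto
qed

lemma sum_Sigma_pairs:
  assumes "finite A" "\<And>b S. (b, S) \<in> A \<Longrightarrow> finite (B b S)"
  shows "(\<Sum>(b, S)\<in>A. \<Sum>(c, R)\<in>B b S. E b S c R) = (\<Sum>((b, S), (c, R))\<in>Sigma A (\<lambda>(b, S). B b S). E b S c R)"
  using assms by (subst sum.Sigma[symmetric]) (auto simp: split_def)

lemma smul_smul_left_expand:
  assumes "finite U"
  shows "smul (smul f g) h a U = (\<Sum>(b, S)\<in>splittings a U. \<Sum>(c, R)\<in>splittings b S.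
    shuffle_sign S (U - S) * shuffle_sign R (S - R) * f c R * g (b - c) (S - R) * h (a - b) (U - S))"
  unfolding smul_splittings[OF assms]
proof (intro sum.cong refl, clarify)
  fix b S assume "(b, S) \<in> splittings a U"
  then have "finite S" using finite_subset[OF _ assms] by (auto simp: splittings_def)
  then show "shuffle_sign S (U - S) * smul f g b S * h (a - b) (U - S) = (\<Sum>(c, R)\<in>splittings b S.
    shuffle_sign S (U - S) * shuffle_sign R (S - R) * f c R * g (b - c) (S - R) * h (a - b) (U - S))"
    unfolding smul_splittings[OF \<open>finite S\<close>] sum_distrib_left sum_distrib_right
    by (simp add: split_def ac_simps)
qed

lemma smul_smul_right_expand:
  assumes "finite U"
  shows "smul f (smul g h) a U = (\<Sum>(c, R)\<in>splittings a U. \<Sum>(d, T)\<in>splittings (a - c) (U - R).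
    shuffle_sign R (U - R) * shuffle_sign T (U - R - T) * f c R * g d T * h (a - c - d) (U - R - T))"
  unfolding smul_splittings[OF assms]
proof (intro sum.cong refl, clarify)
  fix c R
  have "finite (U - R)" using assms by simp
  then show "shuffle_sign R (U - R) * f c R * smul g h (a - c) (U - R) = (\<Sum>(d, T)\<in>splittings (a - c) (U - R).
    shuffle_sign R (U - R) * shuffle_sign T (U - R - T) * f c R * g d T * h (a - c - d) (U - R - T))"
    unfolding smul_splittings[OF \<open>finite (U - R)\<close>] sum_distrib_left
    by (simp add: split_def ac_simps)
qed

text \<open>Both triple products run over chains R \<subseteq> S \<subseteq> U, indexed by (S, R) resp. (R, S - R).\<close>

lemma smul_assoc: "smul (smul f g) h = smul f (smul g h)"
proof (intro ext)
  fix a U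
  show "smul (smul f g) h a U = smul f (smul g h) a U"
  proof (cases "finite U")
    case False
    then show ?thesis by (simp add: smul_infinite)
  next
    case fU: True
    have diff: "U - R - (S - R) = U - S" if "R \<subseteq> S" for R S
      using that by auto
    have "smul (smul f g) h a U = (\<Sum>((b, S), (c, R))\<in>Sigma (splittings a U) (\<lambda>(b, S). splittings b S).
      shuffle_sign S (U - S) * shuffle_sign R (S - R) * f c R * g (b - c) (S - R) * h (a - b) (U - S))"
      unfolding smul_smul_left_expand[OF fU]
      by (rule sum_Sigma_pairs) (auto simp: splittings_def fU dest: finite_subset[OF _ fU])
    also have "\<dots> = (\<Sum>((c, R), (d, T))\<in>Sigma (splittings a U) (\<lambda>(c, R). splittings (a - c) (U - R)).
      shuffle_sign R (U - R) * shuffle_sign T (U - R - T) * f c R * g d T * h (a - c - d) (U - R - T))"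
      by (rule sum.reindex_bij_witness[where i = "\<lambda>((c, R), (d, T)). ((c + d, R \<union> T), (c, R))"
                                          and j = "\<lambda>((b, S), (c, R)). ((c, R), (b - c, S - R))"])
         (auto simp: splittings_def diff shuffle_sign_assoc[OF fU, symmetric] ac_simps)
    also have "\<dots> = smul f (smul g h) a U"
      unfolding smul_smul_right_expand[OF fU]
      by (rule sum_Sigma_pairs[symmetric]) (auto simp: finite_splittings fU)
    finally show ?thesis .
  qed
qed

lemma smul_sadd_left: "smul (sadd f g) h = sadd (smul f h) (smul g h)"
  unfolding smul_def sadd_def by (simp add: algebra_simps sum.distrib)

lemma smul_sdiff_right: "smul h (sdiff f g) = sdiff (smul h f) (smul h g)"
  unfolding smul_def sdiff_def by (simp add: algebra_simps sum_subtractf)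

lemma smul_sscal_left: "smul (sscal c f) h = sscal c (smul f h)"
  unfolding smul_def sscal_def by (simp add: algebra_simps sum_distrib_left)

lemma smul_sscal_right: "smul h (sscal c f) = sscal c (smul h f)"
  unfolding smul_def sscal_def by (simp add: algebra_simps sum_distrib_left)

lemma smul_ssum_left: "smul (ssum f I) g = ssum (\<lambda>i. smul (f i) g) I"
  by (simp add: fun_eq_iff smul_def ssum_def sum_distrib_left sum_distrib_right ac_simps sum.swap[of _ I])

lemma smul_ssum_right: "smul g (ssum f I) = ssum (\<lambda>i. smul g (f i)) I"
  by (simp add: fun_eq_iff smul_def ssum_def sum_distrib_left sum_distrib_right ac_simps sum.swap[of _ I])

lemma smul_sone_left:
  assumes "\<And>a U. f a U \<noteq> 0 \<Longrightarrow> finite U"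
  shows "smul sone f = f"
proof (intro ext)
  fix a U
  show "smul sone f a U = f a U"
  proof (cases "finite U")
    case False
    with assms show ?thesis by (auto simp: smul_infinite)
  next
    case True
    have "smul sone f a U = (\<Sum>b\<le>a. \<Sum>S\<in>Pow U. if b = 0 \<and> S = {} then f a U else 0)"
      unfolding smul_def by (intro sum.cong refl) (auto simp: sone_def inv_count_empty)
    also have "\<dots> = f a U"
      using True by (subst sum.cong[OF refl, of _ _ "\<lambda>b. if b = 0 then f a U else 0"]) (simp_all add: sum.delta)
    finally show ?thesis .
  qed
qed

lemma smul_sone_right:
  assumes "\<And>a U. f a U \<noteq> 0 \<Longrightarrow> finite U"
  shows "smul f sone = f"
proof (intro ext)
  fix a U
  show "smul f sone a U = f a U"
  proof (cases "finite U")
    case False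
    with assms show ?thesis by (auto simp: smul_infinite)
  next
    case True
    have "smul f sone a U = (\<Sum>b\<le>a. \<Sum>S\<in>Pow U. if b = a \<and> S = U then f a U else 0)"
      unfolding smul_def by (intro sum.cong refl) (auto simp: sone_def inv_count_empty)
    also have "\<dots> = f a U"
      using True by (subst sum.cong[OF refl, of _ _ "\<lambda>b. if b = a then f a U else 0"]) (simp_all add: sum.delta)
    finally show ?thesis .
  qed
qed

definition even_graded :: "sga \<Rightarrow> bool" where
  "even_graded f \<longleftrightarrow> (\<forall>a U. f a U \<noteq> 0 \<longrightarrow> finite U \<and> even (card U))"

lemma smul_commute:
  assumes "even_graded f"
  shows "smul f g = smul g f"
proof (intro ext)
  fix a U
  show "smul f g a U = smul g f a U"
  proof (cases "finite U")
    case False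
    then show ?thesis by (simp add: smul_infinite)
  next
    case fU: True
    have "smul g f a U = (\<Sum>(b, S)\<in>splittings a U. shuffle_sign (U - S) S * g (a - b) (U - S) * f b S)"
      unfolding smul_splittings[OF fU]
      by (rule sum.reindex_bij_witness[where i = "\<lambda>(b, S). (a - b, U - S)" and j = "\<lambda>(b, S). (a - b, U - S)"])
         (auto simp: splittings_def double_diff)
    also have "\<dots> = smul f g a U"
      unfolding smul_splittings[OF fU]
    proof (intro sum.cong refl, clarify)
      fix b S assume "(b, S) \<in> splittings a U"
      then have "finite S" "S \<inter> (U - S) = {}" "finite (U - S)"
        using fU finite_subset by (auto simp: splittings_def)
      moreover have "even (card S)" if "f b S \<noteq> 0"
        using assms that by (simp add: even_graded_def)
      ultimately show "shuffle_sign (U - S) S * g (a - b) (U - S) * f b S =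
          shuffle_sign S (U - S) * f b S * g (a - b) (U - S)"
        by (cases "f b S = 0") (simp_all add: shuffle_sign_swap)
    qed
    finally show ?thesis by simp
  qed
qed

lemma even_graded_szero: "even_graded szero"
  by (simp add: even_graded_def szero_def)

lemma even_graded_sone: "even_graded sone"
  by (simp add: even_graded_def sone_def)

lemma even_graded_sadd: "even_graded f \<Longrightarrow> even_graded g \<Longrightarrow> even_graded (sadd f g)"
  unfolding even_graded_def sadd_def by (metis add.right_neutral add_0)

lemma even_graded_sdiff: "even_graded f \<Longrightarrow> even_graded g \<Longrightarrow> even_graded (sdiff f g)"
  unfolding even_graded_def sdiff_def by (metis diff_zero diff_self)

lemma even_graded_sscal: "even_graded f \<Longrightarrow> even_graded (sscal c f)"
  by (auto simp: even_graded_def sscal_def)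

lemma even_graded_smul:
  assumes "even_graded f" "even_graded g"
  shows "even_graded (smul f g)"
  unfolding even_graded_def
proof (intro allI impI)
  fix a U assume "smul f g a U \<noteq> 0"
  then obtain b S where fU: "finite U" and bS: "S \<subseteq> U" "f b S \<noteq> 0" "g (a - b) (U - S) \<noteq> 0"
    by (blast dest: smul_nonzero)
  then have "even (card S)" "even (card (U - S))"
    using assms by (auto simp: even_graded_def)
  moreover have "card U = card S + card (U - S)"
    using card_Diff_subset[OF finite_subset[OF bS(1) fU] bS(1)] card_mono[OF fU bS(1)] by simp
  ultimately show "finite U \<and> even (card U)"
    using fU by simp
qed

subsection \<open>The commutative ring of even series\<close>

typedef even_sga = "{f. even_graded f}" morphisms Rep_even Abs_even
  by (rule exI[of _ szero]) (simp add: even_graded_szero)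

lemma even_graded_Rep: "even_graded (Rep_even x)"
  using Rep_even by simp

lemma Rep_even_finite: "Rep_even x a U \<noteq> 0 \<Longrightarrow> finite U"
  using even_graded_Rep by (auto simp: even_graded_def)

instantiation even_sga :: comm_ring_1
begin

definition "0 = Abs_even szero"
definition "1 = Abs_even sone"
definition "x + y = Abs_even (sadd (Rep_even x) (Rep_even y))"
definition "x - y = Abs_even (sdiff (Rep_even x) (Rep_even y))"
definition "- x = Abs_even (sscal (-1) (Rep_even x))"
definition "x * y = Abs_even (smul (Rep_even x) (Rep_even y))"

lemma Rep_even_zero: "Rep_even 0 = szero"
  by (simp add: zero_even_sga_def Abs_even_inverse even_graded_szero)

lemma Rep_even_one: "Rep_even 1 = sone"
  by (simp add: one_even_sga_def Abs_even_inverse even_graded_sone)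

lemma Rep_even_plus: "Rep_even (x + y) = sadd (Rep_even x) (Rep_even y)"
  by (simp add: plus_even_sga_def Abs_even_inverse even_graded_sadd even_graded_Rep)

lemma Rep_even_minus: "Rep_even (x - y) = sdiff (Rep_even x) (Rep_even y)"
  by (simp add: minus_even_sga_def Abs_even_inverse even_graded_sdiff even_graded_Rep)

lemma Rep_even_uminus: "Rep_even (- x) = sscal (-1) (Rep_even x)"
  by (simp add: uminus_even_sga_def Abs_even_inverse even_graded_sscal even_graded_Rep)

lemma Rep_even_times: "Rep_even (x * y) = smul (Rep_even x) (Rep_even y)"
  by (simp add: times_even_sga_def Abs_even_inverse even_graded_smul even_graded_Rep)

instance
proof
  fix a b c :: even_sga
  show "a * b * c = a * (b * c)"
    by (simp add: Rep_even_inject[symmetric] Rep_even_times smul_assoc)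
  show "a * b = b * a"
    unfolding Rep_even_inject[symmetric] Rep_even_times by (rule smul_commute[OF even_graded_Rep])
  show "1 * a = a"
    by (simp add: Rep_even_inject[symmetric] Rep_even_times Rep_even_one smul_sone_left Rep_even_finite)
  show "a + b + c = a + (b + c)"
    by (simp add: Rep_even_inject[symmetric] Rep_even_plus sadd_def add.assoc)
  show "a + b = b + a"
    by (simp add: Rep_even_inject[symmetric] Rep_even_plus sadd_def add.commute)
  show "0 + a = a"
    by (simp add: Rep_even_inject[symmetric] Rep_even_plus Rep_even_zero sadd_def szero_def)
  show "- a + a = 0"
    by (simp add: Rep_even_inject[symmetric] Rep_even_plus Rep_even_zero Rep_even_uminus sadd_def szero_def sscal_def)
  show "a - b = a + - b"
    by (simp add: Rep_even_inject[symmetric] Rep_even_plus Rep_even_minus Rep_even_uminus sadd_def sdiff_def sscal_def)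
  show "(a + b) * c = a * c + b * c"
    by (simp add: Rep_even_inject[symmetric] Rep_even_plus Rep_even_times smul_sadd_left)
  show "(0::even_sga) \<noteq> 1"
    by (simp add: Rep_even_inject[symmetric] Rep_even_zero Rep_even_one fun_eq_iff szero_def sone_def)
qed

end

lemma Rep_even_sum: "Rep_even (\<Sum>i\<in>A. f i) = ssum (\<lambda>i. Rep_even (f i)) A"
  by (induction A rule: infinite_finite_induct) (simp_all add: Rep_even_zero Rep_even_plus ssum_def szero_def sadd_def)

lemma sprod_eq_Rep_even_prod:
  assumes "\<And>i. even_graded (f i)"
  shows "sprod f N = Rep_even (\<Prod>i<N. Abs_even (f i))"
  by (induction N) (simp_all add: Rep_even_one Rep_even_times Abs_even_inverse assms)

lemma smul_sgen_nonzero: "smul (sgen p) (sgen q) a U \<noteq> 0 \<Longrightarrow> a = 0 \<and> U = {p, q}"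
proof -
  assume "smul (sgen p) (sgen q) a U \<noteq> 0"
  then obtain b S where "b \<le> a" "S \<subseteq> U" "sgen p b S \<noteq> 0" "sgen q (a - b) (U - S) \<noteq> 0"
    by (blast dest: smul_nonzero)
  then have "b = 0" "S = {p}" "a - b = 0" "U - S = {q}"
    by (auto simp: sgen_def split: if_splits)
  with \<open>S \<subseteq> U\<close> \<open>b \<le> a\<close> show ?thesis by auto
qed

lemma uvar_nonzero:
  assumes "uvar c x i a U \<noteq> 0"
  shows "(a = 1 \<and> U = {}) \<or> (a = 0 \<and> U = {0, 2 * i + 2}) \<or> (a = 0 \<and> U = {1, 2 * i + 3})"
proof -
  from assms have "svar_t a U \<noteq> 0 \<or> smul gtauB (gphi i) a U \<noteq> 0 \<or> smul gtauU (gtheta i) a U \<noteq> 0"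
    unfolding uvar_def sscal_def sadd_def by auto
  then show ?thesis
    unfolding gtauB_def gtauU_def gphi_def gtheta_def
    by (auto simp: svar_t_def split: if_splits dest!: smul_sgen_nonzero)
qed

lemma even_graded_uvar: "even_graded (uvar c x i)"
  unfolding even_graded_def by (auto dest!: uvar_nonzero)

lemma uvar_constant_term: "uvar c x i 0 {} = 0"
  using uvar_nonzero[of c x i 0 "{}"] by auto

lemma uvar_neg: "uvar (-1) x i = sscal (-1) (uvar 1 x i)"
  by (simp add: uvar_def sscal_def)

lemma euler_op_uvar: "euler_op (uvar c x i) = uvar c x i"
proof (intro ext)
  fix a U
  have "a + card (U \<inter> {0, 1}) = 1" if "uvar c x i a U \<noteq> 0"
  proof -
    have "{0, 2 * i + 2} \<inter> {0, 1} = {0::nat}" "{1, 2 * i + 3} \<inter> {0, 1} = {1::nat}"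
      by auto
    with uvar_nonzero[OF that] show ?thesis by auto
  qed
  then show "euler_op (uvar c x i) a U = uvar c x i a U"
    by (cases "uvar c x i a U = 0") (simp_all add: euler_op_def)
qed

lemma euler_op_smul: "euler_op (smul f g) = sadd (smul (euler_op f) g) (smul f (euler_op g))"
proof (intro ext)
  fix a U
  show "euler_op (smul f g) a U = sadd (smul (euler_op f) g) (smul f (euler_op g)) a U"
  proof (cases "finite U")
    case False
    then show ?thesis by (simp add: euler_op_def sadd_def smul_infinite)
  next
    case fU: True
    show ?thesis
      unfolding sadd_def smul_splittings[OF fU] euler_op_def sum_distrib_left sum.distrib[symmetric]
    proof (intro sum.cong refl, clarify)
      fix b S assume "(b, S) \<in> splittings a U"
      then have "b \<le> a" "U \<inter> {0, 1} = (S \<inter> {0, 1}) \<union> ((U - S) \<inter> {0, 1})"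
        by (auto simp: splittings_def)
      then have "real (a + card (U \<inter> {0, 1})) =
          real (b + card (S \<inter> {0, 1})) + real (a - b + card ((U - S) \<inter> {0, 1}))"
        by (simp add: card_Un_disjoint disjoint_iff)
      then show "real (a + card (U \<inter> {0, 1})) * (shuffle_sign S (U - S) * f b S * g (a - b) (U - S)) =
         shuffle_sign S (U - S) * (real (b + card (S \<inter> {0, 1})) * f b S) * g (a - b) (U - S) +
         shuffle_sign S (U - S) * f b S * (real (a - b + card ((U - S) \<inter> {0, 1})) * g (a - b) (U - S))"
        by (simp add: algebra_simps)
    qed
  qed
qed

definition euler :: "even_sga \<Rightarrow> even_sga" where
  "euler y = Abs_even (euler_op (Rep_even y))"

lemma Rep_even_euler: "Rep_even (euler y) = euler_op (Rep_even y)"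
proof -
  have "even_graded (euler_op (Rep_even y))"
    using even_graded_Rep[of y] by (auto simp: even_graded_def euler_op_def)
  then show ?thesis by (simp add: euler_def Abs_even_inverse)
qed

lemma euler_mult: "euler (y * z) = euler y * z + y * euler z"
  by (simp add: Rep_even_inject[symmetric] Rep_even_euler Rep_even_times Rep_even_plus euler_op_smul)

lemma euler_add: "euler (y + z) = euler y + euler z"
  by (simp add: Rep_even_inject[symmetric] Rep_even_euler Rep_even_plus euler_op_def sadd_def algebra_simps)

lemma euler_diff: "euler (y - z) = euler y - euler z"
  by (simp add: Rep_even_inject[symmetric] Rep_even_euler Rep_even_minus euler_op_def sdiff_def algebra_simps)

lemma euler_one: "euler 1 = 0"
  by (simp add: Rep_even_inject[symmetric] Rep_even_euler Rep_even_one Rep_even_zero euler_op_def sone_def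
      szero_def fun_eq_iff)

lemma euler_prod:
  "finite A \<Longrightarrow> euler (\<Prod>i\<in>A. f i) = (\<Sum>i\<in>A. euler (f i) * (\<Prod>j\<in>A - {i}. f j))"
proof (induction A rule: finite_induct)
  case empty
  then show ?case by (simp add: euler_one)
next
  case (insert a A)
  have "(\<Prod>j\<in>insert a A - {i}. f j) = f a * (\<Prod>j\<in>A - {i}. f j)" if "i \<in> A" for i
  proof -
    have "insert a A - {i} = insert a (A - {i})" using that insert by auto
    then show ?thesis using insert by simp
  qed
  moreover have "insert a A - {a} = A" using insert by auto
  ultimately show ?case
    using insert by (simp add: euler_mult sum_distrib_left mult_ac cong: sum.cong)
qed

subsection \<open>Geometric series\<close>

lemma even_graded_spow: "even_graded u \<Longrightarrow> even_graded (spow u k)"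
  by (induction k) (auto simp: even_graded_sone even_graded_smul)

lemma spow_nonzero:
  assumes "u 0 {} = 0" "spow u k a U \<noteq> 0"
  shows "k \<le> a + card U"
  using assms(2)
proof (induction k arbitrary: a U)
  case (Suc k)
  then obtain b S where fU: "finite U" and bS: "b \<le> a" "S \<subseteq> U" "spow u k b S \<noteq> 0" "u (a - b) (U - S) \<noteq> 0"
    by (auto dest: smul_nonzero)
  have "k \<le> b + card S" using Suc.IH bS by blast
  moreover have "a - b + card (U - S) \<noteq> 0"
    using bS(4) assms(1) fU by (metis add_is_0 card_0_eq finite_Diff)
  moreover have "card U = card S + card (U - S)"
    using card_Diff_subset[OF finite_subset[OF bS(2) fU] bS(2)] card_mono[OF fU bS(2)] by simp
  ultimately show ?case using bS(1) by simp
qed simp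

lemma sgeom_eq_sum:
  assumes "u 0 {} = 0" "a + card U \<le> K"
  shows "sgeom u a U = (\<Sum>k\<le>K. spow u k a U)"
proof -
  have "(\<Sum>k\<le>K. spow u k a U) = (\<Sum>k\<le>a + card U. spow u k a U) + (\<Sum>k\<in>{..K} - {..a + card U}. spow u k a U)"
    using assms(2) by (subst sum.subset_diff[of "{..a + card U}"]) auto
  also have "(\<Sum>k\<in>{..K} - {..a + card U}. spow u k a U) = 0"
    by (rule sum.neutral) (use spow_nonzero[where u = u, OF assms(1)] in force)
  finally show ?thesis unfolding sgeom_def by simp
qed

lemma even_graded_sgeom:
  assumes "even_graded u"
  shows "even_graded (sgeom u)"
  unfolding even_graded_def
proof (intro allI impI)
  fix a U assume "sgeom u a U \<noteq> 0"
  then obtain k where "spow u k a U \<noteq> 0"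
    unfolding sgeom_def by (auto elim!: sum.not_neutral_contains_not_neutral)
  then show "finite U \<and> even (card U)"
    using even_graded_spow[OF assms] by (auto simp: even_graded_def)
qed

lemma smul_sgeom_eq_sum:
  assumes "u 0 {} = 0" "finite U"
  shows "smul (sgeom u) u a U = (\<Sum>k\<le>a + card U. spow u (Suc k) a U)"
proof -
  have "smul (sgeom u) u a U = (\<Sum>(b, S)\<in>splittings a U.
      shuffle_sign S (U - S) * (\<Sum>k\<le>a + card U. spow u k b S) * u (a - b) (U - S))"
    unfolding smul_splittings[OF assms(2)]
  proof (intro sum.cong refl, clarify)
    fix b S assume "(b, S) \<in> splittings a U"
    then have "b + card S \<le> a + card U"
      using card_mono[OF assms(2)] by (auto simp: splittings_def intro: add_mono)
    then show "shuffle_sign S (U - S) * sgeom u b S * u (a - b) (U - S) =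
        shuffle_sign S (U - S) * (\<Sum>k\<le>a + card U. spow u k b S) * u (a - b) (U - S)"
      by (simp add: sgeom_eq_sum[where u = u, OF assms(1)])
  qed
  also have "\<dots> = (\<Sum>k\<le>a + card U. spow u (Suc k) a U)"
    by (simp add: smul_splittings[OF assms(2)] sum_distrib_left sum_distrib_right split_def
        sum.swap[of _ "splittings a U"])
  finally show ?thesis .
qed

text \<open>The truncation in sgeom is exact, so (1 - u) sgeom u telescopes to u^0.\<close>

lemma sgeom_inverse:
  assumes "even_graded u" "u 0 {} = 0"
  shows "smul (sgeom u) (sdiff sone u) = sone"
proof -
  have fin: "finite U" if "sgeom u a U \<noteq> 0" for a U
    using that even_graded_sgeom[OF assms(1)] by (auto simp: even_graded_def)
  have "smul (sgeom u) (sdiff sone u) = sdiff (sgeom u) (smul (sgeom u) u)"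
    by (simp add: smul_sdiff_right smul_sone_right fin)
  also have "\<dots> = sone"
  proof (intro ext)
    fix a U
    show "sdiff (sgeom u) (smul (sgeom u) u) a U = sone a U"
    proof (cases "finite U")
      case False
      then show ?thesis using fin by (auto simp: sdiff_def smul_infinite sone_def)
    next
      case True
      define K where "K = a + card U"
      have "spow u (Suc K) a U = 0"
        using spow_nonzero[where u = u, OF assms(2), of "Suc K" a U] K_def by auto
      then have "(\<Sum>k\<le>K. spow u k a U) - (\<Sum>k\<le>K. spow u (Suc k) a U) = spow u 0 a U"
        using sum.atMost_Suc_shift[of "\<lambda>k. spow u k a U" K] by simp
      then show ?thesis
        unfolding sdiff_def smul_sgeom_eq_sum[where u = u, OF assms(2) True] by (simp add: sgeom_def K_def)
    qed
  qed
  finally show ?thesis .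
qed

definition u_even :: "real \<Rightarrow> (nat \<Rightarrow> real) \<Rightarrow> nat \<Rightarrow> even_sga" where
  "u_even c x i = Abs_even (uvar c x i)"

definition geom_even :: "real \<Rightarrow> (nat \<Rightarrow> real) \<Rightarrow> nat \<Rightarrow> even_sga" where
  "geom_even c x i = Abs_even (sgeom (uvar c x i))"

lemma Rep_u_even: "Rep_even (u_even c x i) = uvar c x i"
  by (simp add: u_even_def Abs_even_inverse even_graded_uvar)

lemma Rep_geom_even: "Rep_even (geom_even c x i) = sgeom (uvar c x i)"
  by (simp add: geom_even_def Abs_even_inverse even_graded_uvar even_graded_sgeom)

lemma geom_even_inverse: "geom_even c x i * (1 - u_even c x i) = 1"
  by (simp add: Rep_even_inject[symmetric] Rep_even_times Rep_even_minus Rep_even_one Rep_u_even Rep_geom_even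
      sgeom_inverse even_graded_uvar uvar_constant_term)

lemma u_even_neg: "u_even (-1) x i = - u_even 1 x i"
  by (simp add: Rep_even_inject[symmetric] Rep_u_even Rep_even_uminus uvar_neg)

lemma euler_u_even: "euler (u_even c x i) = u_even c x i"
  by (simp add: Rep_even_inject[symmetric] Rep_u_even Rep_even_euler euler_op_uvar)

lemma euler_geom_even: "euler (geom_even c x i) = geom_even c x i * geom_even c x i * u_even c x i"
proof -
  let ?G = "geom_even c x i" and ?U = "u_even c x i"
  have "euler ?G * (1 - ?U) = ?G * ?U"
    using arg_cong[OF geom_even_inverse, of euler]
    by (simp add: euler_mult euler_diff euler_one euler_u_even algebra_simps)
  then have "euler ?G * (?G * (1 - ?U)) = ?G * ?G * ?U"
    by (simp add: ac_simps)
  then show ?thesis by (simp add: geom_even_inverse)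
qed

lemma GH_eq: "GH N x = Rep_even (\<Prod>i<N. geom_even 1 x i)"
  unfolding GH_def geom_even_def by (rule sprod_eq_Rep_even_prod) (simp add: even_graded_uvar even_graded_sgeom)

lemma GE_eq: "GE N x c = Rep_even (\<Prod>i<N. 1 + u_even c x i)"
proof -
  have "Abs_even (sadd sone (uvar c x i)) = 1 + u_even c x i" for i
    by (simp add: Rep_even_inject[symmetric] Abs_even_inverse even_graded_uvar even_graded_sadd
        even_graded_sone Rep_even_plus Rep_even_one Rep_u_even)
  then show ?thesis
    unfolding GE_def by (subst sprod_eq_Rep_even_prod) (simp_all add: even_graded_uvar even_graded_sadd even_graded_sone)
qed

lemma GP_eq: "GP N x c = Rep_even (\<Sum>i<N. u_even c x i * geom_even c x i)"
  unfolding GP_def Rep_even_sum by (simp add: Rep_even_times Rep_u_even Rep_geom_even)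

lemma GH_mult_GE_neg: "smul (GH N x) (GE N x (-1)) = sone"
proof -
  have "(\<Prod>i<N. geom_even 1 x i) * (\<Prod>i<N. 1 + u_even (-1) x i) = (\<Prod>i<N. geom_even 1 x i * (1 - u_even 1 x i))"
    by (simp add: prod.distrib u_even_neg)
  also have "\<dots> = 1"
    by (simp add: geom_even_inverse)
  finally show ?thesis
    unfolding GH_eq GE_eq Rep_even_times[symmetric] by (simp add: Rep_even_one)
qed

lemma GH_mult_GP: "smul (GH N x) (GP N x 1) = euler_op (GH N x)"
proof -
  let ?H = "\<Prod>i<N. geom_even 1 x i"
  have "euler ?H = (\<Sum>i<N. euler (geom_even 1 x i) * (\<Prod>j\<in>{..<N} - {i}. geom_even 1 x j))"
    by (simp add: euler_prod)
  also have "\<dots> = (\<Sum>i<N. u_even 1 x i * geom_even 1 x i * ?H)"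
  proof (intro sum.cong refl)
    fix i assume "i \<in> {..<N}"
    then have "?H = geom_even 1 x i * (\<Prod>j\<in>{..<N} - {i}. geom_even 1 x j)"
      by (simp add: prod.remove)
    then show "euler (geom_even 1 x i) * (\<Prod>j\<in>{..<N} - {i}. geom_even 1 x j) = u_even 1 x i * geom_even 1 x i * ?H"
      by (simp add: euler_geom_even mult_ac)
  qed
  also have "\<dots> = ?H * (\<Sum>i<N. u_even 1 x i * geom_even 1 x i)"
    by (simp add: sum_distrib_left mult_ac)
  finally show ?thesis
    unfolding GH_eq GP_eq Rep_even_times[symmetric] Rep_even_euler[symmetric] by simp
qed

lemma GE_mult_GP_neg: "smul (GE N x 1) (GP N x (-1)) = sscal (-1) (euler_op (GE N x 1))"
proof -
  let ?E = "\<Prod>i<N. 1 + u_even 1 x i" and ?E' = "\<lambda>i. \<Prod>j\<in>{..<N} - {i}. 1 + u_even 1 x j"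
  have inverse: "(1 + u_even 1 x i) * geom_even (-1) x i = 1" for i
    using geom_even_inverse[of "-1" x i] by (simp add: u_even_neg mult_ac)
  have "euler ?E = (\<Sum>i<N. u_even 1 x i * ?E' i)"
    by (simp add: euler_prod euler_add euler_one euler_u_even)
  moreover have "?E * (u_even (-1) x i * geom_even (-1) x i) = - (u_even 1 x i * ?E' i)" if "i < N" for i
  proof -
    have "?E * (u_even (-1) x i * geom_even (-1) x i) =
        - (u_even 1 x i * ((1 + u_even 1 x i) * geom_even (-1) x i) * ?E' i)"
      using that by (simp add: prod.remove u_even_neg mult_ac)
    then show ?thesis by (simp add: inverse)
  qed
  ultimately have "?E * (\<Sum>i<N. u_even (-1) x i * geom_even (-1) x i) = - euler ?E"
    by (simp add: sum_distrib_left sum_negf)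
  then show ?thesis
    unfolding GE_eq GP_eq Rep_even_times[symmetric] Rep_even_euler[symmetric] Rep_even_uminus[symmetric] by simp
qed

subsection \<open>Polynomial functions and their partial derivatives\<close>

type_synonym rfun = "(nat \<Rightarrow> real) \<Rightarrow> real"

lemma sum_fun_apply: "(\<Sum>k\<in>A. f k) x = (\<Sum>k\<in>A. f k x)"
  by (induction A rule: infinite_finite_induct) auto

lemma power_fun_apply: "(f ^ n) x = f x ^ n"
  by (induction n) auto

lemma sum_fun_eq: "(\<Sum>a\<in>A. f a) = (\<lambda>x. \<Sum>a\<in>A. f a x)"
  by (simp add: fun_eq_iff sum_fun_apply)

inductive poly_fun :: "rfun \<Rightarrow> bool" where
  const: "poly_fun (\<lambda>x. c)"
| coord: "poly_fun (\<lambda>x. x k)"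
| add: "poly_fun f \<Longrightarrow> poly_fun g \<Longrightarrow> poly_fun (f + g)"
| mult: "poly_fun f \<Longrightarrow> poly_fun g \<Longrightarrow> poly_fun (f * g)"

lemma poly_fun_has_derivative:
  "poly_fun f \<Longrightarrow> \<exists>f'. poly_fun f' \<and> (\<forall>x. ((\<lambda>y. f (x(i := y))) has_real_derivative f' x) (at (x i)))"
proof (induction rule: poly_fun.induct)
  case (const c)
  show ?case by (intro exI[of _ "\<lambda>x. 0"]) (auto intro: poly_fun.const)
next
  case (coord k)
  show ?case
    by (intro exI[of _ "\<lambda>x. if k = i then 1 else 0"])
       (auto intro: poly_fun.const DERIV_ident)
next
  case (add f g)
  then obtain f' g' where "poly_fun f'" "poly_fun g'"
    "\<And>x. ((\<lambda>y. f (x(i := y))) has_real_derivative f' x) (at (x i))"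
    "\<And>x. ((\<lambda>y. g (x(i := y))) has_real_derivative g' x) (at (x i))" by blast
  then have "((\<lambda>y. (f + g) (x(i := y))) has_real_derivative (f' + g') x) (at (x i))" for x
    by (auto intro: DERIV_add)
  with \<open>poly_fun f'\<close> \<open>poly_fun g'\<close> show ?case by (blast intro: poly_fun.add)
next
  case (mult f g)
  then obtain f' g' where "poly_fun f'" "poly_fun g'"
    "\<And>x. ((\<lambda>y. f (x(i := y))) has_real_derivative f' x) (at (x i))"
    "\<And>x. ((\<lambda>y. g (x(i := y))) has_real_derivative g' x) (at (x i))" by blast
  then have "((\<lambda>y. (f * g) (x(i := y))) has_real_derivative (f' * g + f * g') x) (at (x i))" for x
    by (auto intro!: DERIV_mult[THEN DERIV_cong] simp: ac_simps)
  moreover have "poly_fun (f' * g + f * g')"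
    using mult.hyps \<open>poly_fun f'\<close> \<open>poly_fun g'\<close> by (blast intro: poly_fun.add poly_fun.mult)
  ultimately show ?case by blast
qed

lemma has_pd: "poly_fun f \<Longrightarrow> ((\<lambda>y. f (x(i := y))) has_real_derivative pd i f x) (at (x i))"
  using poly_fun_has_derivative[of f i] by (metis DERIV_imp_deriv pd_def)

lemma poly_fun_pd: "poly_fun f \<Longrightarrow> poly_fun (pd i f)"
proof -
  assume "poly_fun f"
  then obtain f' where "poly_fun f'" "\<And>x. ((\<lambda>y. f (x(i := y))) has_real_derivative f' x) (at (x i))"
    using poly_fun_has_derivative by blast
  moreover from this have "pd i f = f'" by (auto simp: pd_def fun_eq_iff intro: DERIV_imp_deriv)
  ultimately show ?thesis by simp
qed

lemma poly_fun_sum: "(\<And>a. a \<in> A \<Longrightarrow> poly_fun (f a)) \<Longrightarrow> poly_fun (\<Sum>a\<in>A. f a)"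
  by (induction A rule: infinite_finite_induct) (auto intro: poly_fun.add poly_fun.const[of 0, folded zero_fun_def])

lemma poly_fun_prod: "(\<And>a. a \<in> A \<Longrightarrow> poly_fun (f a)) \<Longrightarrow> poly_fun (\<lambda>x. \<Prod>a\<in>A. f a x)"
proof (induction A rule: infinite_finite_induct)
  case (insert a A)
  then have "poly_fun (f a * (\<lambda>x. \<Prod>a\<in>A. f a x))" by (blast intro: poly_fun.mult)
  with insert show ?case by (simp add: times_fun_def)
qed (auto intro: poly_fun.const)

lemma poly_fun_scale: "poly_fun f \<Longrightarrow> poly_fun (\<lambda>x. c * f x)"
  using poly_fun.mult[OF poly_fun.const] by (simp add: times_fun_def)

lemma poly_fun_coord_power: "poly_fun (\<lambda>x. x k ^ n)"
  using poly_fun_prod[of "{..<n}" "\<lambda>_ x. x k"] by (simp add: poly_fun.coord)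

lemma pd_const [simp]: "pd i (\<lambda>x. c) = 0"
  by (auto simp: pd_def)

lemma pd_zero [simp]: "pd i 0 = 0" and pd_one [simp]: "pd i 1 = 0"
  by (simp_all add: zero_fun_def one_fun_def)

lemma pd_add: "poly_fun f \<Longrightarrow> poly_fun g \<Longrightarrow> pd i (f + g) = pd i f + pd i g"
  by (auto simp: pd_def[of i "f + g"] intro!: DERIV_imp_deriv DERIV_add has_pd)

lemma pd_mult: "poly_fun f \<Longrightarrow> poly_fun g \<Longrightarrow> pd i (f * g) = pd i f * g + f * pd i g"
  by (auto simp: pd_def[of i "f * g"] fun_eq_iff ac_simps intro!: DERIV_imp_deriv DERIV_mult[THEN DERIV_cong] has_pd)

lemma pd_sum: "(\<And>a. a \<in> A \<Longrightarrow> poly_fun (f a)) \<Longrightarrow> pd i (\<Sum>a\<in>A. f a) = (\<Sum>a\<in>A. pd i (f a))"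
  by (induction A rule: infinite_finite_induct) (simp_all add: pd_add poly_fun_sum)

lemma pd_scale: "poly_fun f \<Longrightarrow> pd i (\<lambda>x. c * f x) = (\<lambda>x. c * pd i f x)"
  using pd_mult[OF poly_fun.const, of f i c] by (simp add: times_fun_def zero_fun_def)

lemma pd_minus: "poly_fun f \<Longrightarrow> pd i (\<lambda>x. - f x) = (\<lambda>x. - pd i f x)"
  using pd_scale[of f i "-1"] by simp

lemma pd_coord_power: "pd i (\<lambda>x. x k ^ Suc n) = (if k = i then (\<lambda>x. real (Suc n) * x i ^ n) else 0)"
proof
  fix x
  have "((\<lambda>y. (x(i := y)) k ^ Suc n) has_real_derivative (if k = i then real (Suc n) * x i ^ n else 0)) (at (x i))"
    by (cases "k = i") (auto intro: DERIV_pow[of "Suc n", simplified])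
  then show "pd i (\<lambda>x. x k ^ Suc n) x = (if k = i then (\<lambda>x. real (Suc n) * x i ^ n) else 0) x"
    unfolding pd_def by (simp add: DERIV_imp_deriv)
qed

lemma esym_zero: "esym N 0 = 1"
proof -
  have "{S. S \<subseteq> {..<N} \<and> card S = 0} = {{}}"
    by (auto dest: finite_subset[OF _ finite_lessThan])
  then show ?thesis by (simp add: fun_eq_iff esym_def)
qed

lemma esym_empty: "esym 0 n x = (if n = 0 then 1 else 0)"
  by (cases n) (simp_all add: esym_zero, simp add: esym_def)

lemma subsets_lessThan_finite_notin: "T \<subseteq> {..<N::nat} \<Longrightarrow> finite T \<and> N \<notin> T"
  using finite_subset by auto

lemma subsets_lessThan_Suc_card:
  "{S. S \<subseteq> {..<Suc N} \<and> card S = Suc m} =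
     {S. S \<subseteq> {..<N} \<and> card S = Suc m} \<union> insert N ` {S. S \<subseteq> {..<N} \<and> card S = m}"
proof (intro set_eqI iffI)
  fix S assume S: "S \<in> {S. S \<subseteq> {..<Suc N} \<and> card S = Suc m}"
  then have "finite S" by (auto dest: finite_subset)
  show "S \<in> {S. S \<subseteq> {..<N} \<and> card S = Suc m} \<union> insert N ` {S. S \<subseteq> {..<N} \<and> card S = m}"
  proof (cases "N \<in> S")
    case True
    then have "S = insert N (S - {N})" "S - {N} \<in> {S. S \<subseteq> {..<N} \<and> card S = m}"
      using S \<open>finite S\<close> by (auto simp: less_Suc_eq)
    then show ?thesis by blast
  next
    case False
    with S show ?thesis by (auto simp: less_Suc_eq)
  qed
next
  fix S assume "S \<in> {S. S \<subseteq> {..<N} \<and> card S = Suc m} \<union> insert N ` {S. S \<subseteq> {..<N} \<and> card S = m}"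
  then show "S \<in> {S. S \<subseteq> {..<Suc N} \<and> card S = Suc m}"
    by (auto simp: subsets_lessThan_finite_notin)
qed

lemma esym_Suc: "esym (Suc N) (Suc m) x = esym N (Suc m) x + x N * esym N m x"
proof -
  let ?A = "{S. S \<subseteq> {..<N} \<and> card S = Suc m}" and ?B = "{S. S \<subseteq> {..<N} \<and> card S = m}"
  have "esym (Suc N) (Suc m) x = (\<Sum>S\<in>?A. \<Prod>i\<in>S. x i) + (\<Sum>S\<in>insert N ` ?B. \<Prod>i\<in>S. x i)"
    unfolding esym_def subsets_lessThan_Suc_card by (rule sum.union_disjoint) auto
  also have "(\<Sum>S\<in>insert N ` ?B. \<Prod>i\<in>S. x i) = (\<Sum>T\<in>?B. \<Prod>i\<in>insert N T. x i)"
    by (rule sum.reindex_cong[where l = "insert N"]) (auto simp: inj_on_def)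
  also have "\<dots> = x N * esym N m x"
    unfolding esym_def sum_distrib_left
    by (intro sum.cong) (auto simp: subsets_lessThan_finite_notin)
  finally show ?thesis by (simp add: esym_def)
qed

lemma hsym_empty: "hsym 0 n x = (if n = 0 then 1 else 0)"
  unfolding hsym_def by (simp add: PiE_empty_domain)

definition compositions :: "nat \<Rightarrow> nat \<Rightarrow> (nat \<Rightarrow> nat) set" where
  "compositions N n = {\<alpha> \<in> {..<N} \<rightarrow>\<^sub>E {..n}. sum \<alpha> {..<N} = n}"

lemma finite_compositions: "finite (compositions N n)"
  unfolding compositions_def by (rule finite_subset[OF _ finite_PiE[of "{..<N}" "\<lambda>_. {..n}"]]) auto

lemma bij_betw_compositions_Suc:
  "bij_betw (\<lambda>(k, \<beta>). \<beta>(N := k)) (SIGMA k:{..n}. compositions N (n - k)) (compositions (Suc N) n)"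
proof (rule bij_betw_byWitness[where f' = "\<lambda>\<alpha>. (\<alpha> N, \<alpha>(N := undefined))"])
  show "\<forall>z\<in>SIGMA k:{..n}. compositions N (n - k).
      (\<lambda>\<alpha>. (\<alpha> N, \<alpha>(N := undefined))) ((\<lambda>(k, \<beta>). \<beta>(N := k)) z) = z"
    by (auto simp: compositions_def PiE_def extensional_def fun_eq_iff)
  show "\<forall>\<alpha>\<in>compositions (Suc N) n. (\<lambda>(k, \<beta>). \<beta>(N := k)) ((\<lambda>\<alpha>. (\<alpha> N, \<alpha>(N := undefined))) \<alpha>) = \<alpha>"
    by simp
  show "(\<lambda>(k, \<beta>). \<beta>(N := k)) ` (SIGMA k:{..n}. compositions N (n - k)) \<subseteq> compositions (Suc N) n"
  proof (clarify intro!: image_subsetI)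
    fix k \<beta> assume "k \<le> n" "\<beta> \<in> compositions N (n - k)"
    moreover have "sum (\<beta>(N := k)) {..<N} = sum \<beta> {..<N}" by (rule sum.cong) auto
    ultimately show "\<beta>(N := k) \<in> compositions (Suc N) n"
      by (auto simp: compositions_def PiE_def Pi_def extensional_def less_Suc_eq)
  qed
  show "(\<lambda>\<alpha>. (\<alpha> N, \<alpha>(N := undefined))) ` compositions (Suc N) n \<subseteq> (SIGMA k:{..n}. compositions N (n - k))"
  proof (intro image_subsetI)
    fix \<alpha> assume \<alpha>: "\<alpha> \<in> compositions (Suc N) n"
    then have total: "sum \<alpha> {..<N} + \<alpha> N = n" by (simp add: compositions_def)
    have "sum (\<alpha>(N := undefined)) {..<N} = sum \<alpha> {..<N}" by (rule sum.cong) auto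
    moreover have "\<alpha> i \<le> n - \<alpha> N" if "i < N" for i
      using member_le_sum[of i "{..<N}" \<alpha>] that total by simp
    ultimately show "(\<alpha> N, \<alpha>(N := undefined)) \<in> (SIGMA k:{..n}. compositions N (n - k))"
      using \<alpha> total by (auto simp: compositions_def PiE_def Pi_def extensional_def)
  qed
qed

lemma hsym_Suc: "hsym (Suc N) n x = (\<Sum>k\<le>n. x N ^ k * hsym N (n - k) x)"
proof -
  have "hsym (Suc N) n x = (\<Sum>z\<in>(SIGMA k:{..n}. compositions N (n - k)). \<Prod>i<Suc N. x i ^ ((\<lambda>(k, \<beta>). \<beta>(N := k)) z) i)"
    unfolding hsym_def compositions_def[symmetric]
    by (rule sum.reindex_bij_betw[OF bij_betw_compositions_Suc, symmetric])
  also have "\<dots> = (\<Sum>(k, \<beta>)\<in>(SIGMA k:{..n}. compositions N (n - k)). x N ^ k * (\<Prod>i<N. x i ^ \<beta> i))"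
    by (intro sum.cong refl) (auto simp: mult.commute)
  also have "\<dots> = (\<Sum>k\<le>n. x N ^ k * hsym N (n - k) x)"
    by (subst sum.Sigma[symmetric]) (simp_all add: finite_compositions hsym_def compositions_def[symmetric] sum_distrib_left)
  finally show ?thesis .
qed

lemma hsym_zero: "hsym N 0 = 1"
  by (induction N) (simp_all add: fun_eq_iff hsym_empty hsym_Suc)

lemma psym_Suc_eq: "psym N (Suc r) = (\<Sum>k<N. (\<lambda>x. x k ^ Suc r))"
  by (simp add: fun_eq_iff sum_fun_apply psym_def del: power_Suc)

lemma psym_zero: "psym N 0 = 0"
  by (simp add: fun_eq_iff psym_def)

lemma poly_fun_hsym: "poly_fun (hsym N n)"
  unfolding hsym_def[abs_def] sum_fun_eq[symmetric]
  by (intro poly_fun_sum poly_fun_prod poly_fun_coord_power)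

lemma poly_fun_esym: "poly_fun (esym N n)"
  unfolding esym_def[abs_def] sum_fun_eq[symmetric]
  by (intro poly_fun_sum poly_fun_prod poly_fun.coord)

lemma poly_fun_psym: "poly_fun (psym N n)"
  by (cases n) (simp_all add: psym_zero psym_Suc_eq poly_fun_sum poly_fun_coord_power
      poly_fun.const[of 0, folded zero_fun_def] del: power_Suc)

lemma pd_psym_Suc: "i < N \<Longrightarrow> pd i (psym N (Suc r)) = (\<lambda>x. real (Suc r) * x i ^ r)"
  by (simp add: psym_Suc_eq pd_sum poly_fun_coord_power pd_coord_power del: power_Suc)

lemma pd_pd_psym:
  assumes "i < N" "j < N"
  shows "pd i (pd j (psym N (r + 2))) = (\<lambda>x. if i = j then real ((r + 2) * (r + 1)) * x i ^ r else 0)"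
proof -
  have "pd i (pd j (psym N (r + 2))) = pd i (\<lambda>x. real (Suc (Suc r)) * x j ^ Suc r)"
    using pd_psym_Suc[OF assms(2), of "Suc r"] by (simp add: numeral_2_eq_2 del: power_Suc)
  also have "\<dots> = (\<lambda>x. real (Suc (Suc r)) * (if j = i then real (Suc r) * x i ^ r else 0))"
    by (simp add: pd_scale poly_fun_coord_power pd_coord_power del: power_Suc)
  finally show ?thesis by (auto simp: fun_eq_iff algebra_simps)
qed

lemma pd_pd_psym_one: "j < N \<Longrightarrow> pd i (pd j (psym N 1)) = 0"
  using pd_psym_Suc[of j N 0] by simp

definition fps_geom :: "'a::comm_ring_1 \<Rightarrow> 'a fps" where
  "fps_geom a = Abs_fps (\<lambda>k. a ^ k)"

lemma fps_geom_inverse: "fps_geom a * (1 - fps_const a * fps_X) = 1"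
  by (intro fps_ext) (auto simp: fps_geom_def algebra_simps power_eq_if)

lemma fps_X_mult_deriv_nth: "fps_nth (fps_X * fps_deriv f) n = of_nat n * fps_nth f n"
  by (cases n) simp_all

lemma fps_X_mult_deriv_geom: "fps_X * fps_deriv (fps_geom a) = (fps_geom a - 1) * fps_geom a"
proof (intro fps_ext)
  fix n
  have "fps_nth ((fps_geom a - 1) * fps_geom a) n = (\<Sum>k=0..n. if k = 0 then 0 else a ^ n)"
    unfolding fps_mult_nth by (intro sum.cong) (auto simp: fps_geom_def power_add[symmetric])
  also have "\<dots> = of_nat n * a ^ n"
  proof -
    have "(\<Sum>k=0..m. if k = 0 then 0 else b) = of_nat m * b" for m and b :: 'a
      by (induction m) (auto simp: algebra_simps)
    then show ?thesis .
  qed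
  finally show "fps_nth (fps_X * fps_deriv (fps_geom a)) n = fps_nth ((fps_geom a - 1) * fps_geom a) n"
    by (simp add: fps_X_mult_deriv_nth fps_geom_def)
qed

lemma one_minus_geom_neg: "(1 - fps_geom (- a)) * (1 + fps_const a * fps_X) = fps_const a * fps_X"
  using fps_geom_inverse[of "- a"] by (simp add: algebra_simps fps_const_neg[symmetric] del: fps_const_neg)

subsection \<open>The classical generating functions over the ring of polynomial functions\<close>

definition h_gf :: "nat \<Rightarrow> rfun fps" where
  "h_gf N = Abs_fps (hsym N)"

definition e_gf :: "nat \<Rightarrow> rfun fps" where
  "e_gf N = Abs_fps (esym N)"

definition e_alt_gf :: "nat \<Rightarrow> rfun fps" where
  "e_alt_gf N = Abs_fps (\<lambda>n x. (-1) ^ n * esym N n x)"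

definition p_gf :: "nat \<Rightarrow> rfun fps" where
  "p_gf N = Abs_fps (psym N)"

definition p_alt_gf :: "nat \<Rightarrow> rfun fps" where
  "p_alt_gf N = Abs_fps (\<lambda>n x. (-1) ^ (n + 1) * psym N n x)"

lemma gf_empty: "h_gf 0 = 1" "e_gf 0 = 1" "e_alt_gf 0 = 1" "p_gf 0 = 0" "p_alt_gf 0 = 0"
  by (simp_all add: fps_eq_iff fun_eq_iff h_gf_def e_gf_def e_alt_gf_def p_gf_def p_alt_gf_def
      hsym_empty psym_def esym_empty)

lemma h_gf_Suc: "h_gf (Suc N) = fps_geom (\<lambda>x. x N) * h_gf N"
  by (intro fps_ext ext)
     (simp add: h_gf_def fps_geom_def fps_mult_nth hsym_Suc atLeast0AtMost sum_fun_apply power_fun_apply)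

lemma e_gf_Suc: "e_gf (Suc N) = (1 + fps_const (\<lambda>x. x N) * fps_X) * e_gf N"
proof (intro fps_ext ext)
  fix n x
  show "fps_nth (e_gf (Suc N)) n x = fps_nth ((1 + fps_const (\<lambda>x. x N) * fps_X) * e_gf N) n x"
    by (cases n) (simp_all add: e_gf_def esym_Suc esym_zero algebra_simps)
qed

lemma e_alt_gf_Suc: "e_alt_gf (Suc N) = (1 - fps_const (\<lambda>x. x N) * fps_X) * e_alt_gf N"
proof (intro fps_ext ext)
  fix n x
  show "fps_nth (e_alt_gf (Suc N)) n x = fps_nth ((1 - fps_const (\<lambda>x. x N) * fps_X) * e_alt_gf N) n x"
    by (cases n) (simp_all add: e_alt_gf_def esym_Suc esym_zero algebra_simps)
qed

lemma p_gf_Suc: "p_gf (Suc N) = p_gf N + (fps_geom (\<lambda>x. x N) - 1)"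
  by (intro fps_ext ext) (simp add: p_gf_def fps_geom_def psym_def power_fun_apply)

lemma p_alt_gf_Suc: "p_alt_gf (Suc N) = p_alt_gf N + (1 - fps_geom (- (\<lambda>x. x N)))"
proof (intro fps_ext ext)
  fix n x
  show "fps_nth (p_alt_gf (Suc N)) n x = fps_nth (p_alt_gf N + (1 - fps_geom (- (\<lambda>x. x N)))) n x"
    by (simp add: p_alt_gf_def fps_geom_def psym_def power_fun_apply power_minus' algebra_simps)
qed

lemma e_alt_gf_mult_h_gf: "e_alt_gf N * h_gf N = 1"
proof (induction N)
  case 0
  show ?case by (simp add: gf_empty)
next
  case (Suc N)
  have "e_alt_gf (Suc N) * h_gf (Suc N) =
      (fps_geom (\<lambda>x. x N) * (1 - fps_const (\<lambda>x. x N) * fps_X)) * (e_alt_gf N * h_gf N)"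
    by (simp add: e_alt_gf_Suc h_gf_Suc ac_simps)
  then show ?case by (simp add: Suc fps_geom_inverse)
qed

lemma h_gf_newton: "fps_X * fps_deriv (h_gf N) = p_gf N * h_gf N"
proof (induction N)
  case 0
  show ?case by (simp add: gf_empty)
next
  case (Suc N)
  let ?g = "fps_geom (\<lambda>x. x N)"
  have "fps_X * fps_deriv (h_gf (Suc N)) = ?g * (fps_X * fps_deriv (h_gf N)) + (fps_X * fps_deriv ?g) * h_gf N"
    by (simp add: h_gf_Suc algebra_simps)
  also have "\<dots> = p_gf (Suc N) * h_gf (Suc N)"
    by (simp add: Suc fps_X_mult_deriv_geom h_gf_Suc p_gf_Suc algebra_simps)
  finally show ?case .
qed

lemma e_gf_newton: "fps_X * fps_deriv (e_gf N) = p_alt_gf N * e_gf N"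
proof (induction N)
  case 0
  show ?case by (simp add: gf_empty)
next
  case (Suc N)
  let ?l = "1 + fps_const (\<lambda>x. x N) * fps_X"
  have "fps_X * fps_deriv (e_gf (Suc N)) = ?l * (fps_X * fps_deriv (e_gf N)) + fps_const (\<lambda>x. x N) * fps_X * e_gf N"
    by (simp add: e_gf_Suc algebra_simps)
  also have "\<dots> = ?l * (p_alt_gf N * e_gf N) + ((1 - fps_geom (- (\<lambda>x. x N))) * ?l) * e_gf N"
    by (simp only: Suc one_minus_geom_neg)
  also have "\<dots> = (p_alt_gf N + (1 - fps_geom (- (\<lambda>x. x N)))) * (?l * e_gf N)"
    by (simp add: algebra_simps)
  finally show ?case by (simp add: e_gf_Suc p_alt_gf_Suc)
qed

lemma hsym_one: "hsym N 1 = psym N 1"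
  using arg_cong[OF h_gf_newton, of "\<lambda>A. fps_nth A 1"]
  by (simp add: h_gf_def p_gf_def hsym_zero psym_zero fps_mult_nth_1 fps_X_mult_deriv_nth)

lemma esym_one: "esym N 1 = psym N 1"
  using arg_cong[OF e_gf_newton, of "\<lambda>A. fps_nth A 1"]
  by (simp add: e_gf_def p_alt_gf_def esym_zero psym_zero fps_mult_nth_1 fps_X_mult_deriv_nth fun_eq_iff)

lemma pd_pd_hsym_one: "j < N \<Longrightarrow> pd i (pd j (hsym N 1)) = 0"
  unfolding hsym_one by (rule pd_pd_psym_one)

lemma pd_pd_esym_one: "j < N \<Longrightarrow> pd i (pd j (esym N 1)) = 0"
  unfolding esym_one by (rule pd_pd_psym_one)

definition poly_fps :: "rfun fps \<Rightarrow> bool" where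
  "poly_fps A \<longleftrightarrow> (\<forall>n. poly_fun (fps_nth A n))"

definition fps_pd :: "nat \<Rightarrow> rfun fps \<Rightarrow> rfun fps" where
  "fps_pd i A = Abs_fps (\<lambda>n. pd i (fps_nth A n))"

lemma poly_fps_mult: "poly_fps A \<Longrightarrow> poly_fps B \<Longrightarrow> poly_fps (A * B)"
  unfolding poly_fps_def fps_mult_nth by (blast intro: poly_fun_sum poly_fun.mult)

lemma poly_fps_pd: "poly_fps A \<Longrightarrow> poly_fps (fps_pd i A)"
  by (simp add: poly_fps_def fps_pd_def poly_fun_pd)

lemma fps_pd_add: "poly_fps A \<Longrightarrow> poly_fps B \<Longrightarrow> fps_pd i (A + B) = fps_pd i A + fps_pd i B"
  by (simp add: fps_eq_iff fps_pd_def poly_fps_def pd_add)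

lemma fps_pd_mult: "poly_fps A \<Longrightarrow> poly_fps B \<Longrightarrow> fps_pd i (A * B) = fps_pd i A * B + A * fps_pd i B"
  unfolding poly_fps_def
  by (simp add: fps_eq_iff fps_pd_def fps_mult_nth pd_sum poly_fun.mult pd_mult sum.distrib)

lemma fps_pd_pd_mult:
  assumes "poly_fps A" "poly_fps B"
  shows "fps_pd i (fps_pd j (A * B)) =
    fps_pd i (fps_pd j A) * B + fps_pd j A * fps_pd i B + fps_pd i A * fps_pd j B + A * fps_pd i (fps_pd j B)"
  using assms by (simp add: fps_pd_mult fps_pd_add poly_fps_mult poly_fps_pd algebra_simps)

lemma fps_pd_zero: "fps_pd i 0 = 0"
  by (simp add: fps_eq_iff fps_pd_def)

lemma fps_pd_one: "fps_pd i 1 = 0"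
  by (simp add: fps_eq_iff fps_pd_def fps_one_nth)

lemma fps_pd_X_mult_deriv: "poly_fps A \<Longrightarrow> fps_pd i (fps_X * fps_deriv A) = fps_X * fps_deriv (fps_pd i A)"
  by (simp add: fps_eq_iff fps_pd_def poly_fps_def fps_X_mult_deriv_nth of_nat_fun times_fun_def pd_scale)

lemma fps_pd_eq_X_mult:
  "pd i (fps_nth A 0) = 0 \<Longrightarrow> fps_pd i A = fps_X * Abs_fps (\<lambda>n. pd i (fps_nth A (Suc n)))"
  by (simp add: fps_eq_iff fps_pd_def)

lemma fps_pd_pd_eq_X2_mult:
  "pd i (pd j (fps_nth A 0)) = 0 \<Longrightarrow> pd i (pd j (fps_nth A 1)) = 0 \<Longrightarrow>
   fps_pd i (fps_pd j A) = fps_X ^ 2 * Abs_fps (\<lambda>n. pd i (pd j (fps_nth A (n + 2))))"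
proof (intro fps_ext)
  fix n
  assume *: "pd i (pd j (fps_nth A 0)) = 0" "pd i (pd j (fps_nth A 1)) = 0"
  show "fps_nth (fps_pd i (fps_pd j A)) n =
      fps_nth (fps_X ^ 2 * Abs_fps (\<lambda>n. pd i (pd j (fps_nth A (n + 2))))) n"
  proof (cases n)
    case (Suc m)
    then show ?thesis using * by (cases m) (simp_all add: fps_pd_def fps_X_power_mult_nth)
  qed (use * in \<open>simp add: fps_pd_def fps_X_power_mult_nth\<close>)
qed

lemma poly_fps_gf: "poly_fps (h_gf N)" "poly_fps (e_gf N)" "poly_fps (e_alt_gf N)"
  "poly_fps (p_gf N)" "poly_fps (p_alt_gf N)"
  unfolding poly_fps_def h_gf_def e_gf_def e_alt_gf_def p_gf_def p_alt_gf_def fps_nth_Abs_fps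
  by (blast intro: poly_fun_hsym poly_fun_esym poly_fun_psym poly_fun_scale)+

lemma fps_pd_h_gf: "fps_pd i (h_gf N) = fps_X * Abs_fps (\<lambda>n. pd i (hsym N (Suc n)))"
  by (subst fps_pd_eq_X_mult) (simp_all add: h_gf_def hsym_zero)

lemma fps_pd_e_gf: "fps_pd i (e_gf N) = fps_X * Abs_fps (\<lambda>n. pd i (esym N (Suc n)))"
  by (subst fps_pd_eq_X_mult) (simp_all add: e_gf_def esym_zero)

lemma fps_pd_e_alt_gf:
  "fps_pd i (e_alt_gf N) = fps_X * Abs_fps (\<lambda>n x. (-1) ^ Suc n * pd i (esym N (Suc n)) x)"
  by (subst fps_pd_eq_X_mult) (simp_all add: e_alt_gf_def esym_zero pd_scale pd_minus poly_fun_esym poly_fun_scale)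

lemma fps_pd_p_gf:
  "i < N \<Longrightarrow> fps_pd i (p_gf N) = fps_X * Abs_fps (\<lambda>n x. real (Suc n) * x i ^ n)"
  by (subst fps_pd_eq_X_mult) (simp_all add: p_gf_def psym_zero pd_psym_Suc)

lemma fps_pd_p_alt_gf:
  "i < N \<Longrightarrow> fps_pd i (p_alt_gf N) = fps_X * Abs_fps (\<lambda>n x. (-1) ^ n * (real (Suc n) * x i ^ n))"
  by (subst fps_pd_eq_X_mult)
     (simp_all add: p_alt_gf_def psym_zero pd_scale pd_minus poly_fun_psym poly_fun_scale pd_psym_Suc)

lemma fps_pd_pd_h_gf:
  "j < N \<Longrightarrow> fps_pd i (fps_pd j (h_gf N)) = fps_X ^ 2 * Abs_fps (\<lambda>n. pd i (pd j (hsym N (n + 2))))"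
  by (subst fps_pd_pd_eq_X2_mult) (simp_all add: h_gf_def hsym_zero pd_pd_hsym_one[simplified])

lemma fps_pd_pd_e_gf:
  "j < N \<Longrightarrow> fps_pd i (fps_pd j (e_gf N)) = fps_X ^ 2 * Abs_fps (\<lambda>n. pd i (pd j (esym N (n + 2))))"
  by (subst fps_pd_pd_eq_X2_mult) (simp_all add: e_gf_def esym_zero pd_pd_esym_one[simplified])

lemma fps_pd_pd_e_alt_gf:
  "j < N \<Longrightarrow> fps_pd i (fps_pd j (e_alt_gf N)) =
     fps_X ^ 2 * Abs_fps (\<lambda>n x. (-1) ^ n * pd i (pd j (esym N (n + 2))) x)"
  by (subst fps_pd_pd_eq_X2_mult)
     (simp_all add: e_alt_gf_def esym_zero pd_scale pd_minus poly_fun_esym poly_fun_pd pd_pd_esym_one[simplified] zero_fun_def)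

lemma fps_pd_pd_p_gf:
  "i < N \<Longrightarrow> j < N \<Longrightarrow> fps_pd i (fps_pd j (p_gf N)) =
     fps_X ^ 2 * Abs_fps (\<lambda>n x. if i = j then real ((n + 2) * (n + 1)) * x i ^ n else 0)"
  by (subst fps_pd_pd_eq_X2_mult) (simp_all add: p_gf_def psym_zero pd_pd_psym_one[simplified] pd_pd_psym[simplified])

lemma fps_pd_pd_p_alt_gf:
  "i < N \<Longrightarrow> j < N \<Longrightarrow> fps_pd i (fps_pd j (p_alt_gf N)) =
     fps_X ^ 2 * Abs_fps (\<lambda>n x. (-1) ^ Suc n * (if i = j then real ((n + 2) * (n + 1)) * x i ^ n else 0))"
  by (subst fps_pd_pd_eq_X2_mult)
     (simp_all add: p_alt_gf_def psym_zero pd_scale pd_minus poly_fun_psym poly_fun_scale poly_fun_pd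
        pd_pd_psym_one[simplified] pd_pd_psym[simplified] zero_fun_def)

subsection \<open>Partial derivatives of the classical identities\<close>

text \<open>A k-th partial derivative of each generating function is divisible by t^k, since h_0, e_0, p_0
  are constant and h_1 = e_1 = p_1 is linear; each identity is a coefficient of t^(n+k).\<close>

lemma e_h_convolution_pd:
  "(\<Sum>r=0..n. (-1) ^ r * (esym N r x * pd i (hsym N (n - r + 1)) x
                          - hsym N (n - r) x * pd i (esym N (r + 1)) x)) = 0"
proof -
  let ?E = "e_alt_gf N" and ?H = "h_gf N"
  let ?E1 = "Abs_fps (\<lambda>n x. (-1) ^ Suc n * pd i (esym N (Suc n)) x)"
  let ?H1 = "Abs_fps (\<lambda>n. pd i (hsym N (Suc n)))"
  have "fps_X ^ 1 * (?E1 * ?H + ?E * ?H1) = fps_pd i (?E * ?H)"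
    by (simp add: fps_pd_mult poly_fps_gf fps_pd_e_alt_gf fps_pd_h_gf algebra_simps)
  also have "\<dots> = 0"
    by (simp add: e_alt_gf_mult_h_gf fps_pd_one)
  finally have "fps_nth (?E1 * ?H + ?E * ?H1) n x = 0"
    using fps_X_power_mult_nth[of 1 "?E1 * ?H + ?E * ?H1" "n + 1"] by simp
  then show ?thesis
    by (simp add: fps_mult_nth sum_fun_apply e_alt_gf_def h_gf_def)
       (simp add: sum.distrib sum_subtractf sum_negf algebra_simps)
qed

lemma e_h_convolution_pd_pd:
  assumes "j < N"
  shows "(\<Sum>r=0..n. (-1) ^ r * (hsym N (n - r) x * pd i (pd j (esym N (r + 2))) x
       - pd i (hsym N (n - r + 1)) x * pd j (esym N (r + 1)) x
       - pd i (esym N (r + 1)) x * pd j (hsym N (n - r + 1)) x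
       + esym N r x * pd i (pd j (hsym N (n - r + 2))) x)) = 0"
proof -
  let ?E = "e_alt_gf N" and ?H = "h_gf N"
  let ?E1 = "\<lambda>i. Abs_fps (\<lambda>n x. (-1) ^ Suc n * pd i (esym N (Suc n)) x)"
  let ?H1 = "\<lambda>i. Abs_fps (\<lambda>n. pd i (hsym N (Suc n)))"
  let ?E2 = "Abs_fps (\<lambda>n x. (-1) ^ n * pd i (pd j (esym N (n + 2))) x)"
  let ?H2 = "Abs_fps (\<lambda>n. pd i (pd j (hsym N (n + 2))))"
  let ?F = "?E2 * ?H + ?E1 j * ?H1 i + ?E1 i * ?H1 j + ?E * ?H2"
  have "fps_X ^ 2 * ?F = fps_pd i (fps_pd j (?E * ?H))"
    using assms
    by (simp only: fps_pd_pd_mult poly_fps_gf fps_pd_pd_e_alt_gf fps_pd_pd_h_gf,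
        simp add: fps_pd_e_alt_gf fps_pd_h_gf power2_eq_square algebra_simps)
  also have "\<dots> = 0"
    by (simp add: e_alt_gf_mult_h_gf fps_pd_one fps_pd_zero)
  finally have "fps_nth ?F n x = 0"
    using fps_X_power_mult_nth[of 2 ?F "n + 2"] by simp
  then show ?thesis
    by (simp add: fps_mult_nth sum_fun_apply e_alt_gf_def h_gf_def)
       (simp add: sum.distrib sum_subtractf sum_negf algebra_simps)
qed

lemma newton_h_pd:
  assumes "i < N"
  shows "real (n + 1) * pd i (hsym N (n + 1)) x =
    (\<Sum>r=0..n. psym N r x * pd i (hsym N (n - r + 1)) x + real (r + 1) * (hsym N (n - r) x * x i ^ r))"
proof -
  let ?P = "p_gf N" and ?H = "h_gf N"
  let ?P1 = "Abs_fps (\<lambda>n x. real (Suc n) * x i ^ n)" and ?H1 = "Abs_fps (\<lambda>n. pd i (hsym N (Suc n)))"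
  have "fps_X * fps_deriv (fps_pd i ?H) = fps_pd i (fps_X * fps_deriv ?H)"
    by (simp add: fps_pd_X_mult_deriv poly_fps_gf)
  also have "\<dots> = fps_pd i (?P * ?H)"
    by (simp add: h_gf_newton)
  also have "\<dots> = fps_X ^ 1 * (?P1 * ?H + ?P * ?H1)"
    using assms by (simp add: fps_pd_mult poly_fps_gf fps_pd_p_gf fps_pd_h_gf algebra_simps)
  finally have "fps_nth (fps_X * fps_deriv (fps_pd i ?H)) (n + 1) x = fps_nth (?P1 * ?H + ?P * ?H1) n x"
    using fps_X_power_mult_nth[of 1 "?P1 * ?H + ?P * ?H1" "n + 1"] by simp
  then show ?thesis
    by (simp only: fps_X_mult_deriv_nth,
        simp add: fps_pd_def fps_mult_nth sum_fun_apply p_gf_def h_gf_def)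
       (simp add: sum.distrib algebra_simps)
qed

lemma newton_e_pd:
  assumes "i < N"
  shows "real (n + 1) * pd i (esym N (n + 1)) x =
    (\<Sum>r=0..n. (-1) ^ (r + 1) * (psym N r x * pd i (esym N (n - r + 1)) x - real (r + 1) * (esym N (n - r) x * x i ^ r)))"
proof -
  let ?P = "p_alt_gf N" and ?E = "e_gf N"
  let ?P1 = "Abs_fps (\<lambda>n x. (-1) ^ n * (real (Suc n) * x i ^ n))"
  let ?E1 = "Abs_fps (\<lambda>n. pd i (esym N (Suc n)))"
  have "fps_X * fps_deriv (fps_pd i ?E) = fps_pd i (fps_X * fps_deriv ?E)"
    by (simp add: fps_pd_X_mult_deriv poly_fps_gf)
  also have "\<dots> = fps_pd i (?P * ?E)"
    by (simp add: e_gf_newton)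
  also have "\<dots> = fps_X ^ 1 * (?P1 * ?E + ?P * ?E1)"
    using assms by (simp add: fps_pd_mult poly_fps_gf fps_pd_p_alt_gf fps_pd_e_gf algebra_simps)
  finally have "fps_nth (fps_X * fps_deriv (fps_pd i ?E)) (n + 1) x = fps_nth (?P1 * ?E + ?P * ?E1) n x"
    using fps_X_power_mult_nth[of 1 "?P1 * ?E + ?P * ?E1" "n + 1"] by simp
  then show ?thesis
    by (simp only: fps_X_mult_deriv_nth,
        simp add: fps_pd_def fps_mult_nth sum_fun_apply p_alt_gf_def e_gf_def)
       (simp add: sum.distrib sum_subtractf sum_negf algebra_simps)
qed

lemma newton_h_pd_pd:
  assumes "i < N" "j < N"
  shows "real (n + 2) * pd i (pd j (hsym N (n + 2))) x =
    (\<Sum>r=0..n. psym N r x * pd i (pd j (hsym N (n - r + 2))) x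
       + real (r + 1) * (x i ^ r * pd j (hsym N (n - r + 1)) x + pd i (hsym N (n - r + 1)) x * x j ^ r)
       + real ((r + 2) * (r + 1)) * (hsym N (n - r) x * (if i = j then x i ^ r else 0)))"
proof -
  let ?P = "p_gf N" and ?H = "h_gf N"
  let ?P1 = "\<lambda>i. Abs_fps (\<lambda>n x. real (Suc n) * x i ^ n)"
  let ?H1 = "\<lambda>i. Abs_fps (\<lambda>n. pd i (hsym N (Suc n)))"
  let ?P2 = "Abs_fps (\<lambda>n x. if i = j then real ((n + 2) * (n + 1)) * x i ^ n else 0)"
  let ?H2 = "Abs_fps (\<lambda>n. pd i (pd j (hsym N (n + 2))))"
  let ?F = "?P2 * ?H + ?P1 j * ?H1 i + ?P1 i * ?H1 j + ?P * ?H2"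
  have "fps_X * fps_deriv (fps_pd i (fps_pd j ?H)) = fps_pd i (fps_pd j (fps_X * fps_deriv ?H))"
    by (simp add: fps_pd_X_mult_deriv poly_fps_gf poly_fps_pd)
  also have "\<dots> = fps_pd i (fps_pd j (?P * ?H))"
    by (simp add: h_gf_newton)
  also have "\<dots> = fps_X ^ 2 * ?F"
    using assms
    by (simp only: fps_pd_pd_mult poly_fps_gf fps_pd_pd_p_gf fps_pd_pd_h_gf,
        simp add: fps_pd_p_gf fps_pd_h_gf power2_eq_square algebra_simps)
  finally have "fps_nth (fps_X * fps_deriv (fps_pd i (fps_pd j ?H))) (n + 2) x = fps_nth ?F n x"
    using fps_X_power_mult_nth[of 2 ?F "n + 2"] by simp
  then show ?thesis
    by (simp only: fps_X_mult_deriv_nth,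
        simp add: fps_pd_def fps_mult_nth sum_fun_apply p_gf_def h_gf_def)
       (cases "i = j"; simp add: sum.distrib sum_distrib_left algebra_simps)
qed

lemma newton_e_pd_pd:
  assumes "i < N" "j < N"
  shows "real (n + 2) * pd i (pd j (esym N (n + 2))) x =
    (\<Sum>r=0..n. (-1) ^ (r + 1) * (psym N r x * pd i (pd j (esym N (n - r + 2))) x
       - real (r + 1) * (x i ^ r * pd j (esym N (n - r + 1)) x + pd i (esym N (n - r + 1)) x * x j ^ r)
       + real ((r + 2) * (r + 1)) * (esym N (n - r) x * (if i = j then x i ^ r else 0))))"
proof -
  let ?P = "p_alt_gf N" and ?E = "e_gf N"
  let ?P1 = "\<lambda>i. Abs_fps (\<lambda>n x. (-1) ^ n * (real (Suc n) * x i ^ n))"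
  let ?E1 = "\<lambda>i. Abs_fps (\<lambda>n. pd i (esym N (Suc n)))"
  let ?P2 = "Abs_fps (\<lambda>n x. (-1) ^ Suc n * (if i = j then real ((n + 2) * (n + 1)) * x i ^ n else 0))"
  let ?E2 = "Abs_fps (\<lambda>n. pd i (pd j (esym N (n + 2))))"
  let ?F = "?P2 * ?E + ?P1 j * ?E1 i + ?P1 i * ?E1 j + ?P * ?E2"
  have "fps_X * fps_deriv (fps_pd i (fps_pd j ?E)) = fps_pd i (fps_pd j (fps_X * fps_deriv ?E))"
    by (simp add: fps_pd_X_mult_deriv poly_fps_gf poly_fps_pd)
  also have "\<dots> = fps_pd i (fps_pd j (?P * ?E))"
    by (simp add: e_gf_newton)
  also have "\<dots> = fps_X ^ 2 * ?F"
    using assms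
    by (simp only: fps_pd_pd_mult poly_fps_gf fps_pd_pd_p_alt_gf fps_pd_pd_e_gf,
        simp add: fps_pd_p_alt_gf fps_pd_e_gf power2_eq_square algebra_simps)
  finally have "fps_nth (fps_X * fps_deriv (fps_pd i (fps_pd j ?E))) (n + 2) x = fps_nth ?F n x"
    using fps_X_power_mult_nth[of 2 ?F "n + 2"] by simp
  then show ?thesis
    by (simp only: fps_X_mult_deriv_nth,
        simp add: fps_pd_def fps_mult_nth sum_fun_apply p_alt_gf_def e_gf_def)
       (cases "i = j"; simp add: sum.distrib sum_subtractf sum_negf sum_distrib_left algebra_simps)
qed

definition gen_comb :: "nat \<Rightarrow> (nat \<Rightarrow> sga) \<Rightarrow> (nat \<Rightarrow> real) \<Rightarrow> sga" where
  "gen_comb N G K = ssum (\<lambda>i. sscal (K i) (G i)) {..<N}"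

definition phi_theta_comb :: "nat \<Rightarrow> (nat \<Rightarrow> nat \<Rightarrow> real) \<Rightarrow> sga" where
  "phi_theta_comb N K = ssum (\<lambda>i. ssum (\<lambda>j. sscal (K i j) (smul (gphi i) (gtheta j))) {..<N}) {..<N}"

lemma gen_comb_apply: "gen_comb N G K a U = (\<Sum>i<N. K i * G i a U)"
  by (simp add: gen_comb_def ssum_def sscal_def)

lemma phi_theta_comb_apply:
  "phi_theta_comb N K a U = (\<Sum>i<N. \<Sum>j<N. K i j * smul (gphi i) (gtheta j) a U)"
  by (simp add: phi_theta_comb_def ssum_def sscal_def)

lemma gen_comb_cong: "(\<And>i. i < N \<Longrightarrow> K i = L i) \<Longrightarrow> gen_comb N G K = gen_comb N G L"
  by (simp add: fun_eq_iff gen_comb_apply)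

lemma phi_theta_comb_cong:
  "(\<And>i j. i < N \<Longrightarrow> j < N \<Longrightarrow> K i j = L i j) \<Longrightarrow> phi_theta_comb N K = phi_theta_comb N L"
  by (simp add: fun_eq_iff phi_theta_comb_apply)

lemma gen_comb_zero: "gen_comb N G (\<lambda>i. 0) = szero"
  by (simp add: fun_eq_iff gen_comb_apply szero_def)

lemma phi_theta_comb_zero: "phi_theta_comb N (\<lambda>i j. 0) = szero"
  by (simp add: fun_eq_iff phi_theta_comb_apply szero_def)

lemma gen_comb_sscal: "sscal c (gen_comb N G K) = gen_comb N G (\<lambda>i. c * K i)"
  by (simp add: fun_eq_iff gen_comb_apply sscal_def sum_distrib_left mult.assoc)

lemma gen_comb_sadd: "sadd (gen_comb N G K) (gen_comb N G L) = gen_comb N G (\<lambda>i. K i + L i)"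
  by (simp add: fun_eq_iff gen_comb_apply sadd_def sum.distrib[symmetric] algebra_simps)

lemma gen_comb_sdiff: "sdiff (gen_comb N G K) (gen_comb N G L) = gen_comb N G (\<lambda>i. K i - L i)"
  by (simp add: fun_eq_iff gen_comb_apply sdiff_def sum_subtractf[symmetric] algebra_simps)

lemma gen_comb_ssum: "ssum (\<lambda>r. gen_comb N G (M r)) R = gen_comb N G (\<lambda>i. \<Sum>r\<in>R. M r i)"
  by (simp add: fun_eq_iff gen_comb_apply ssum_def sum_distrib_right sum.swap[of _ R])

lemma phi_theta_comb_sscal: "sscal c (phi_theta_comb N K) = phi_theta_comb N (\<lambda>i j. c * K i j)"
  by (simp add: fun_eq_iff phi_theta_comb_apply sscal_def sum_distrib_left mult.assoc)

lemma phi_theta_comb_sadd: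
  "sadd (phi_theta_comb N K) (phi_theta_comb N L) = phi_theta_comb N (\<lambda>i j. K i j + L i j)"
  by (simp add: fun_eq_iff phi_theta_comb_apply sadd_def sum.distrib[symmetric] algebra_simps)

lemma phi_theta_comb_sdiff:
  "sdiff (phi_theta_comb N K) (phi_theta_comb N L) = phi_theta_comb N (\<lambda>i j. K i j - L i j)"
  by (simp add: fun_eq_iff phi_theta_comb_apply sdiff_def sum_subtractf[symmetric] algebra_simps)

lemma phi_theta_comb_ssum: "ssum (\<lambda>r. phi_theta_comb N (M r)) R = phi_theta_comb N (\<lambda>i j. \<Sum>r\<in>R. M r i j)"
proof -
  have "(\<Sum>r\<in>R. \<Sum>i<N. \<Sum>j<N. M r i j * m i j) = (\<Sum>i<N. \<Sum>j<N. (\<Sum>r\<in>R. M r i j) * m i j)"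
    for m :: "nat \<Rightarrow> nat \<Rightarrow> real"
  proof -
    have "(\<Sum>r\<in>R. \<Sum>i<N. \<Sum>j<N. M r i j * m i j) = (\<Sum>i<N. \<Sum>j<N. \<Sum>r\<in>R. M r i j * m i j)"
      by (subst sum.swap) (simp add: sum.swap[of _ R])
    then show ?thesis by (simp add: sum_distrib_right)
  qed
  then show ?thesis by (simp add: fun_eq_iff phi_theta_comb_apply ssum_def)
qed

lemma smul_gen_comb: "smul (gen_comb N gphi K) (gen_comb N gtheta L) = phi_theta_comb N (\<lambda>i j. K i * L j)"
  unfolding gen_comb_def phi_theta_comb_def smul_ssum_left smul_ssum_right smul_sscal_left smul_sscal_right
  by (simp add: fun_eq_iff ssum_def sscal_def sum_distrib_left ac_simps,
      intro allI, subst sum.swap, simp add: ac_simps)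

lemma glin_eq: "glin G F N n x = gen_comb N G (\<lambda>i. pd i (F N (n + 1)) x)"
  by (simp add: glin_def gen_comb_def)

lemma plin_eq: "plin G N n x = gen_comb N G (\<lambda>i. x i ^ n)"
  by (simp add: plin_def gen_comb_def)

lemma gbu_eq: "gbu F N n x = phi_theta_comb N (\<lambda>i j. pd i (pd j (F N (n + 2))) x)"
  by (simp add: gbu_def phi_theta_comb_def)

lemma pbu_eq: "pbu N n x = phi_theta_comb N (\<lambda>i j. if i = j then x i ^ n else 0)"
  by (simp add: fun_eq_iff phi_theta_comb_apply pbu_def ssum_def sscal_def if_distrib[of "\<lambda>t. t * _"]
      sum.delta cong: if_cong)

lemmas to_coordinates = glin_eq plin_eq gbu_eq pbu_eq smul_gen_comb gen_comb_sscal gen_comb_sadd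
  gen_comb_sdiff gen_comb_ssum phi_theta_comb_sscal phi_theta_comb_sadd phi_theta_comb_sdiff phi_theta_comb_ssum

lemma gbu_e_h_convolution:
  "ssum (\<lambda>r. sscal ((-1) ^ r)
     (sadd (sdiff (sdiff (sscal (hsym N (n - r) x) (gbu esym N r x))
                         (smul (glin gphi hsym N (n - r) x) (glin gtheta esym N r x)))
                  (smul (glin gphi esym N r x) (glin gtheta hsym N (n - r) x)))
           (sscal (esym N r x) (gbu hsym N (n - r) x)))) {0..n} = szero"
  unfolding to_coordinates phi_theta_comb_zero[of N, symmetric]
  by (rule phi_theta_comb_cong) (rule e_h_convolution_pd_pd)

lemma gbu_hsym_newton:
  "sscal (real (n + 2)) (gbu hsym N n x) =
     ssum (\<lambda>r. sadd (sadd (sscal (psym N r x) (gbu hsym N (n - r) x))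
                (sscal (real (r + 1))
                   (sadd (smul (plin gphi N r x) (glin gtheta hsym N (n - r) x))
                         (smul (glin gphi hsym N (n - r) x) (plin gtheta N r x)))))
                (sscal (real ((r + 2) * (r + 1))) (sscal (hsym N (n - r) x) (pbu N r x)))) {0..n}"
  unfolding to_coordinates by (rule phi_theta_comb_cong) (rule newton_h_pd_pd)

lemma gbu_esym_newton:
  "sscal (real (n + 2)) (gbu esym N n x) =
     ssum (\<lambda>r. sscal ((-1) ^ (r + 1))
             (sadd (sdiff (sscal (psym N r x) (gbu esym N (n - r) x))
                (sscal (real (r + 1))
                   (sadd (smul (plin gphi N r x) (glin gtheta esym N (n - r) x))
                         (smul (glin gphi esym N (n - r) x) (plin gtheta N r x)))))
                (sscal (real ((r + 2) * (r + 1))) (sscal (esym N (n - r) x) (pbu N r x))))) {0..n}"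
  unfolding to_coordinates by (rule phi_theta_comb_cong) (rule newton_e_pd_pd)

lemma glin_e_h_convolution:
  "ssum (\<lambda>r. sscal ((-1) ^ r)
     (sdiff (sscal (esym N r x) (glin G hsym N (n - r) x))
            (sscal (hsym N (n - r) x) (glin G esym N r x)))) {0..n} = szero"
  unfolding to_coordinates gen_comb_zero[of N G, symmetric]
  by (rule gen_comb_cong) (rule e_h_convolution_pd)

lemma glin_hsym_newton:
  "sscal (real (n + 1)) (glin G hsym N n x) =
     ssum (\<lambda>r. sadd (sscal (psym N r x) (glin G hsym N (n - r) x))
                 (sscal (real (r + 1)) (sscal (hsym N (n - r) x) (plin G N r x)))) {0..n}"
  unfolding to_coordinates by (rule gen_comb_cong) (rule newton_h_pd)

lemma glin_esym_newton:
  "sscal (real (n + 1)) (glin G esym N n x) =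
     ssum (\<lambda>r. sscal ((-1) ^ (r + 1))
            (sdiff (sscal (psym N r x) (glin G esym N (n - r) x))
                   (sscal (real (r + 1)) (sscal (esym N (n - r) x) (plin G N r x))))) {0..n}"
  unfolding to_coordinates by (rule gen_comb_cong) (rule newton_e_pd)

theorem mainTheorem4:
  fixes N n :: nat and x :: "nat \<Rightarrow> real"
  shows
   "smul (GH N x) (GE N x (-1)) = sone
  \<and> smul (GH N x) (GP N x 1) = euler_op (GH N x)
  \<and> smul (GE N x 1) (GP N x (-1)) = sscal (-1) (euler_op (GE N x 1))
  \<and> ssum (\<lambda>r. sscal ((-1) ^ r)
        (sadd (sdiff (sdiff (sscal (hsym N (n - r) x) (gbu esym N r x))
                            (smul (glin gphi hsym N (n - r) x) (glin gtheta esym N r x)))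
                     (smul (glin gphi esym N r x) (glin gtheta hsym N (n - r) x)))
              (sscal (esym N r x) (gbu hsym N (n - r) x)))) {0..n} = szero
  \<and> sscal (real (n + 2)) (gbu hsym N n x) =
      ssum (\<lambda>r. sadd (sadd (sscal (psym N r x) (gbu hsym N (n - r) x))
                  (sscal (real (r + 1))
                     (sadd (smul (plin gphi N r x) (glin gtheta hsym N (n - r) x))
                           (smul (glin gphi hsym N (n - r) x) (plin gtheta N r x)))))
                  (sscal (real ((r + 2) * (r + 1))) (sscal (hsym N (n - r) x) (pbu N r x))))
        {0..n}
  \<and> sscal (real (n + 2)) (gbu esym N n x) =
      ssum (\<lambda>r. sscal ((-1) ^ (r + 1))
               (sadd (sdiff (sscal (psym N r x) (gbu esym N (n - r) x))
                  (sscal (real (r + 1))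
                     (sadd (smul (plin gphi N r x) (glin gtheta esym N (n - r) x))
                           (smul (glin gphi esym N (n - r) x) (plin gtheta N r x)))))
                  (sscal (real ((r + 2) * (r + 1))) (sscal (esym N (n - r) x) (pbu N r x)))))
        {0..n}
  \<and> (\<forall>G \<in> {gphi, gtheta}.
       ssum (\<lambda>r. sscal ((-1) ^ r)
           (sdiff (sscal (esym N r x) (glin G hsym N (n - r) x))
                  (sscal (hsym N (n - r) x) (glin G esym N r x)))) {0..n} = szero
     \<and> sscal (real (n + 1)) (glin G hsym N n x) =
         ssum (\<lambda>r. sadd (sscal (psym N r x) (glin G hsym N (n - r) x))
                     (sscal (real (r + 1)) (sscal (hsym N (n - r) x) (plin G N r x)))) {0..n}
     \<and> sscal (real (n + 1)) (glin G esym N n x) =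
         ssum (\<lambda>r. sscal ((-1) ^ (r + 1))
                (sdiff (sscal (psym N r x) (glin G esym N (n - r) x))
                       (sscal (real (r + 1)) (sscal (esym N (n - r) x) (plin G N r x))))) {0..n})"
  by (intro conjI ballI GH_mult_GE_neg GH_mult_GP GE_mult_GP_neg gbu_e_h_convolution gbu_hsym_newton
      gbu_esym_newton glin_e_h_convolution glin_hsym_newton glin_esym_newton)

end
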